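(* Let $\mathcal{C}$ be a binary formally self-dual code of length $n$, and let $\Lambda_{\mathrm{A}}(\mathcal{C})$ be its Construction A lattice. Then for every $\tau>0$, $$\bigl[\Xi_{\Lambda_{\mathrm{A}}(\mathcal{C})}(\tau)\bigr]^{-1}=\frac{W_{\mathcal{C}}\bigl(\sqrt{1+t(\tau)},\sqrt{1-t(\tau)}\bigr)}{2^{n/2}},$$ where $t(\tau)=\vartheta_4^2(i\tau)/\vartheta_3^2(i\tau)$ satisfies $0<t(\tau)<1$. Moreover, defining $f_{\mathcal{C}}(t)=W_{\mathcal{C}}(\sqrt{1+t},\sqrt{1-t})$ for $0<t<1$, maximizing the secrecy function $\Xi_{\Lambda_{\mathrm{A}}(\mathcal{C})}(\tau)$ over $\tau>0$ is equivalent to determining the minimum of $f_{\mathcal{C}}(t)$ over $t\in(0,1)$ (via the correspondence $t=t(\tau)$).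
   Context: For a binary linear code $\mathcal{C}\subseteq\mathbb{F}_2^n$, $W_{\mathcal{C}}(x,y)=\sum_{w=0}^n A_w x^{n-w}y^w$ with $A_w$ the number of codewords of Hamming weight $w$; $\mathcal{C}$ is formally self-dual if $W_{\mathcal{C}}=W_{\mathcal{C}^\perp}$ (so $\dim\mathcal{C}=n/2$). Construction A: $\Lambda_{\mathrm{A}}(\mathcal{C})=\frac{1}{\sqrt2}(\phi(\mathcal{C})+2\mathbb{Z}^n)$, $\phi$ the natural embedding $\mathbb{F}_2^n\to\mathbb{R}^n$. Theta series: $\Theta_\Lambda(z)=\sum_{\boldsymbol{\lambda}\in\Lambda}e^{i\pi z\|\boldsymbol{\lambda}\|^2}$, $\operatorname{Im}z>0$. For a lattice of volume $\nu^n$ (volume $=|\det|$ of a generator matrix), the secrecy function is $\Xi_\Lambda(\tau)=\Theta_{\nu\mathbb{Z}^n}(i\tau)/\Theta_\Lambda(i\tau)$, $\tau>0$. Jacobi theta functions: $\vartheta_3(z)=\sum_{m\in\mathbb{Z}}e^{i\pi z m^2}$, $\vartheta_4(z)=\sum_{m\in\mathbb{Z}}(-1)^m e^{i\pi z m^2}$. *)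

theory Defs
  imports "HOL-Analysis.Analysis"
begin

text \<open>Binary words of length n = CARD('n): vectors bool^'n (True = 1 in F_2).\<close>

definition word_add :: "bool^'n \<Rightarrow> bool^'n \<Rightarrow> bool^'n" where
  "word_add x y = (\<chi> i. x$i \<noteq> y$i)"

definition zero_word :: "bool^'n" where
  "zero_word = (\<chi> i. False)"

definition hamming_weight :: "bool^'n \<Rightarrow> nat" where
  "hamming_weight x = card {i. x$i}"

definition binary_linear_code :: "(bool^'n) set \<Rightarrow> bool" where
  "binary_linear_code C \<longleftrightarrow> zero_word \<in> C \<and> (\<forall>x\<in>C. \<forall>y\<in>C. word_add x y \<in> C)"

definition dual_code :: "(bool^'n) set \<Rightarrow> (bool^'n) set" where
  "dual_code C = {y. \<forall>x\<in>C. even (card {i. x$i \<and> y$i})}"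

definition weight_dist :: "(bool^'n) set \<Rightarrow> nat \<Rightarrow> nat" where
  "weight_dist C w = card {c\<in>C. hamming_weight c = w}"

definition weight_enum :: "(bool^'n) set \<Rightarrow> real \<Rightarrow> real \<Rightarrow> real" where
  "weight_enum C x y =
     (\<Sum>w = 0..CARD('n). real (weight_dist C w) * x ^ (CARD('n) - w) * y ^ w)"

text \<open>Formally self-dual: W_C = W_{C^perp} as polynomials, i.e. equal weight distributions.\<close>
definition formally_self_dual :: "(bool^'n) set \<Rightarrow> bool" where
  "formally_self_dual C \<longleftrightarrow> binary_linear_code C \<and>
     (\<forall>w. weight_dist C w = weight_dist (dual_code C) w)"

definition embed_word :: "bool^'n \<Rightarrow> real^'n" where
  "embed_word c = (\<chi> i. if c$i then 1 else 0)"

definition int_vec :: "int^'n \<Rightarrow> real^'n" where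
  "int_vec z = (\<chi> i. of_int (z$i))"

definition constructionA :: "(bool^'n) set \<Rightarrow> (real^'n) set" where
  "constructionA C = {(1 / sqrt 2) *\<^sub>R (embed_word c + 2 *\<^sub>R int_vec z) | c z. c \<in> C}"

definition generator_matrix :: "real^'n^'n \<Rightarrow> (real^'n) set \<Rightarrow> bool" where
  "generator_matrix M L \<longleftrightarrow> invertible M \<and> L = range (\<lambda>z. int_vec z v* M)"

definition lattice_volume :: "(real^'n) set \<Rightarrow> real" where
  "lattice_volume L = \<bar>det (SOME M. generator_matrix M L)\<bar>"

definition scaled_Zn :: "real \<Rightarrow> (real^'n) set" where
  "scaled_Zn \<nu> = range (\<lambda>z. \<nu> *\<^sub>R int_vec z)"

definition theta_series :: "(real^'n) set \<Rightarrow> complex \<Rightarrow> complex" where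
  "theta_series L z = (\<Sum>\<^sub>\<infinity>l\<in>L. exp (\<i> * complex_of_real pi * z * complex_of_real ((norm l)\<^sup>2)))"

definition secrecy_function :: "(real^'n) set \<Rightarrow> real \<Rightarrow> complex" where
  "secrecy_function L \<tau> =
     theta_series (scaled_Zn (root CARD('n) (lattice_volume L)) :: (real^'n) set) (\<i> * complex_of_real \<tau>)
     / theta_series L (\<i> * complex_of_real \<tau>)"

definition jacobi_theta3 :: "complex \<Rightarrow> complex" where
  "jacobi_theta3 z = (\<Sum>\<^sub>\<infinity>m::int. exp (\<i> * complex_of_real pi * z * of_int (m\<^sup>2)))"

definition jacobi_theta4 :: "complex \<Rightarrow> complex" where
  "jacobi_theta4 z = (\<Sum>\<^sub>\<infinity>m::int. (-1) powi m * exp (\<i> * complex_of_real pi * z * of_int (m\<^sup>2)))"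

definition theta_ratio :: "real \<Rightarrow> complex" where
  "theta_ratio \<tau> = (jacobi_theta4 (\<i> * complex_of_real \<tau>))\<^sup>2 / (jacobi_theta3 (\<i> * complex_of_real \<tau>))\<^sup>2"

definition f_code :: "(bool^'n) set \<Rightarrow> real \<Rightarrow> real" where
  "f_code C t = weight_enum C (sqrt (1 + t)) (sqrt (1 - t))"

end

theory Submission
  imports Defs
begin

text \<open>
  On the imaginary axis all theta functions are real Gaussian sums.  Splitting the Construction A
  lattice into the cosets \<open>(c + 2\<int>\<^sup>n) / sqrt 2\<close>, \<open>c \<in> C\<close>, its theta series at \<open>i \<tau>\<close> becomes the
  weight enumerator evaluated at \<open>(\<theta>\<^sub>3(2 i \<tau>), \<theta>\<^sub>2(2 i \<tau>))\<close>, while that of \<open>\<int>\<^sup>n\<close> is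
  \<open>\<theta>\<^sub>3(i \<tau>)\<^sup>n\<close>.  A formally self-dual code has \<open>2\<^sup>n\<^sup>/\<^sup>2\<close> codewords, hence an information set
  of size \<open>n/2\<close>, which yields a generator matrix of determinant 1.  The duplication formulas
  \<open>2 \<theta>\<^sub>3(2 i \<tau>)\<^sup>2 = \<theta>\<^sub>3\<^sup>2 + \<theta>\<^sub>4\<^sup>2\<close> and \<open>2 \<theta>\<^sub>2(2 i \<tau>)\<^sup>2 = \<theta>\<^sub>3\<^sup>2 - \<theta>\<^sub>4\<^sup>2\<close> (at \<open>i \<tau>\<close>) then express
  the weight enumerator through \<open>t = \<theta>\<^sub>4\<^sup>2 / \<theta>\<^sub>3\<^sup>2\<close>.  Finally \<open>t\<close> is continuous with values in
  \<open>(0, 1)\<close>, tends to 1 at infinity, and tends to 0 at 0 because of the Landen step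
  \<open>t(\<tau>) \<le> t(2 \<tau>)\<^sup>2\<close>; so it maps \<open>(0, \<infinity>)\<close> onto \<open>(0, 1)\<close>.
\<close>

section \<open>Theta functions on the imaginary axis\<close>

definition gauss :: "real \<Rightarrow> real \<Rightarrow> real" where
  "gauss u x = exp (- (pi * u * x\<^sup>2))"

definition alt_sign :: "int \<Rightarrow> real" where
  "alt_sign m = (if even m then 1 else -1)"

definition theta3_axis :: "real \<Rightarrow> real" where
  "theta3_axis u = (\<Sum>\<^sub>\<infinity>m::int. gauss u (of_int m))"

definition theta4_axis :: "real \<Rightarrow> real" where
  "theta4_axis u = (\<Sum>\<^sub>\<infinity>m::int. alt_sign m * gauss u (of_int m))"

definition theta2_axis :: "real \<Rightarrow> real" where
  "theta2_axis u = (\<Sum>\<^sub>\<infinity>m::int. gauss u (of_int m + 1/2))"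

lemma gauss_pos [simp]: "gauss u x > 0"
  by (simp add: gauss_def)

lemma alt_sign_add: "alt_sign (m + k) = alt_sign m * alt_sign k"
  by (auto simp: alt_sign_def)

lemma abs_alt_sign [simp]: "\<bar>alt_sign m\<bar> = 1"
  by (simp add: alt_sign_def)

lemma summable_on_int_geometric:
  fixes q :: real
  assumes "0 \<le> q" "q < 1"
  shows "(\<lambda>m::int. q ^ nat \<bar>m\<bar>) summable_on UNIV"
proof -
  have nat: "(\<lambda>n::nat. q ^ n) summable_on UNIV"
    using summable_on_UNIV_nonneg_real_iff[of "\<lambda>n. q ^ n"] assms summable_geometric[of q] by simp
  have "(\<lambda>m::int. q ^ nat \<bar>m\<bar>) summable_on range int"
    by (subst summable_on_reindex) (auto simp: inj_on_def o_def intro: nat)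
  moreover have "(\<lambda>m::int. q ^ nat \<bar>m\<bar>) summable_on range (\<lambda>n::nat. - int n)"
    by (subst summable_on_reindex) (auto simp: inj_on_def o_def intro: nat)
  moreover have "range int \<union> range (\<lambda>n::nat. - int n) = UNIV"
  proof -
    have "m \<in> range int \<union> range (\<lambda>n::nat. - int n)" for m :: int
    proof (cases "m \<ge> 0")
      case True
      then show ?thesis by (intro UnI1 image_eqI[of _ _ "nat m"]) auto
    next
      case False
      then show ?thesis by (intro UnI2 image_eqI[of _ _ "nat (- m)"]) auto
    qed
    then show ?thesis by blast
  qed
  ultimately show ?thesis
    using summable_on_union by metis
qed

lemma int_abs_le_square: "\<bar>m :: int\<bar> \<le> m\<^sup>2"
proof (cases "m = 0")
  case False
  then have "\<bar>m\<bar> * 1 \<le> \<bar>m\<bar> * \<bar>m\<bar>"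
    by (intro mult_left_mono) auto
  then show ?thesis
    by (simp add: power2_eq_square abs_mult_self_eq)
qed simp

lemma shifted_square_lower_bound: "\<bar>real_of_int m\<bar> / 2 - a\<^sup>2 \<le> (real_of_int m + a)\<^sup>2"
proof -
  have "\<bar>real_of_int m\<bar> \<le> (real_of_int m)\<^sup>2"
    by (metis int_abs_le_square of_int_abs of_int_le_iff of_int_power)
  moreover have "0 \<le> (real_of_int m + 2 * a)\<^sup>2"
    by simp
  moreover have "(real_of_int m + a)\<^sup>2 = (real_of_int m)\<^sup>2 + 2 * real_of_int m * a + a\<^sup>2"
    and "(real_of_int m + 2 * a)\<^sup>2 = (real_of_int m)\<^sup>2 + 4 * real_of_int m * a + 4 * a\<^sup>2"
    by (simp_all add: power2_eq_square algebra_simps)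
  ultimately show ?thesis
    by linarith
qed

lemma gauss_shift_le_geometric:
  assumes "u > 0"
  shows "gauss u (of_int m + a) \<le> exp (pi * u * a\<^sup>2) * exp (- (pi * u / 2)) ^ nat \<bar>m\<bar>"
proof -
  have "exp (pi * u * a\<^sup>2) * exp (- (pi * u / 2)) ^ nat \<bar>m\<bar>
        = exp (- (pi * u * (\<bar>real_of_int m\<bar> / 2 - a\<^sup>2)))"
    by (simp add: exp_of_nat_mult[symmetric] exp_add[symmetric] algebra_simps)
  moreover have "pi * u * (\<bar>real_of_int m\<bar> / 2 - a\<^sup>2) \<le> pi * u * (real_of_int m + a)\<^sup>2"
    using assms by (intro mult_left_mono shifted_square_lower_bound) auto
  ultimately show ?thesis
    by (simp add: gauss_def)
qed

lemma summable_on_gauss_shift: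
  assumes "u > 0"
  shows "(\<lambda>m::int. gauss u (of_int m + a)) summable_on UNIV"
proof (rule summable_on_comparison_test)
  show "(\<lambda>m::int. exp (pi * u * a\<^sup>2) * exp (- (pi * u / 2)) ^ nat \<bar>m\<bar>) summable_on UNIV"
    using assms by (intro summable_on_cmult_right summable_on_int_geometric) auto
qed (use gauss_shift_le_geometric[OF assms] less_imp_le[OF gauss_pos] in auto)

lemma summable_on_gauss:
  "u > 0 \<Longrightarrow> (\<lambda>m::int. gauss u (of_int m)) summable_on UNIV"
  using summable_on_gauss_shift[of u 0] by simp

lemma summable_on_alt_sign_gauss:
  assumes "u > 0"
  shows "(\<lambda>m::int. alt_sign m * gauss u (of_int m)) summable_on UNIV"
proof -
  have "(\<lambda>m::int. norm (alt_sign m * gauss u (of_int m))) = (\<lambda>m. gauss u (of_int m))"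
    by (simp add: abs_mult less_imp_le[OF gauss_pos])
  then show ?thesis
    using summable_on_gauss[OF assms] summable_on_iff_abs_summable_on_real by metis
qed

lemma has_sum_mult_real:
  fixes f :: "'a \<Rightarrow> real" and g :: "'b \<Rightarrow> real"
  assumes f: "f summable_on A" and g: "g summable_on B"
  shows "((\<lambda>(x, y). f x * g y) has_sum (infsum f A * infsum g B)) (A \<times> B)"
proof (rule has_sum_SigmaI[where g = "\<lambda>x. f x * infsum g B"])
  show "((\<lambda>x. f x * infsum g B) has_sum infsum f A * infsum g B) A"
    by (rule has_sum_cmult_left[OF has_sum_infsum[OF f]])
  show "((\<lambda>y. case (x, y) of (x, y) \<Rightarrow> f x * g y) has_sum f x * infsum g B) B" for x
    using has_sum_cmult_right[OF has_sum_infsum[OF g], of "f x"] by simp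
  have fa: "(\<lambda>x. \<bar>f x\<bar>) summable_on A" and ga: "(\<lambda>y. \<bar>g y\<bar>) summable_on B"
    using f g summable_on_iff_abs_summable_on_real by (metis real_norm_def summable_on_cong)+
  have "(\<lambda>(x, y). \<bar>f x\<bar> * \<bar>g y\<bar>) summable_on A \<times> B"
  proof (rule summable_on_SigmaI[where g = "\<lambda>x. \<bar>f x\<bar> * infsum (\<lambda>y. \<bar>g y\<bar>) B"])
    show "((\<lambda>y. case (x, y) of (x, y) \<Rightarrow> \<bar>f x\<bar> * \<bar>g y\<bar>) has_sum \<bar>f x\<bar> * infsum (\<lambda>y. \<bar>g y\<bar>) B) B" for x
      using has_sum_cmult_right[OF has_sum_infsum[OF ga], of "\<bar>f x\<bar>"] by simp
  qed (auto intro: summable_on_cmult_left[OF fa])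
  then show "(\<lambda>(x, y). f x * g y) summable_on A \<times> B"
    by (subst summable_on_iff_abs_summable_on_real) (simp add: case_prod_unfold abs_mult)
qed

lemma has_sum_even_pairs_iff:
  fixes G :: "int \<times> int \<Rightarrow> real"
  shows "((\<lambda>p. if even (fst p + snd p) then G p else 0) has_sum X) UNIV \<longleftrightarrow>
         ((\<lambda>(a, b). G (a + b, a - b)) has_sum X) UNIV"
proof -
  let ?E = "{p::int \<times> int. even (fst p + snd p)}"
  have "((\<lambda>p. if even (fst p + snd p) then G p else 0) has_sum X) UNIV \<longleftrightarrow> (G has_sum X) ?E"
    by (rule has_sum_cong_neutral) auto
  also have "\<dots> \<longleftrightarrow> ((\<lambda>(a, b). G (a + b, a - b)) has_sum X) UNIV"
  proof (rule has_sum_reindex_bij_witness[symmetric, where j = "\<lambda>(a, b). (a + b, a - b)"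
        and i = "\<lambda>(m, k). ((m + k) div 2, (m - k) div 2)"])
    fix p :: "int \<times> int" assume "p \<in> ?E"
    then obtain m k where p: "p = (m, k)" "even (m + k)" by (cases p) auto
    then have "(m + k) div 2 + (m - k) div 2 = m" "(m + k) div 2 - (m - k) div 2 = k" by presburger+
    then show "(case (case p of (m, k) \<Rightarrow> ((m + k) div 2, (m - k) div 2)) of (a, b) \<Rightarrow> (a + b, a - b)) = p"
      using p by simp
  next
    fix p :: "int \<times> int"
    obtain a b where p: "p = (a, b)" by (cases p)
    have "(a + b + (a - b)) div 2 = a" "(a + b - (a - b)) div 2 = b" by presburger+
    then show "(case (case p of (a, b) \<Rightarrow> (a + b, a - b)) of (m, k) \<Rightarrow> ((m + k) div 2, (m - k) div 2)) = p"
      using p by simp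
    show "(case p of (a, b) \<Rightarrow> (a + b, a - b)) \<in> ?E" using p by (simp; presburger)
  qed auto
  finally show ?thesis .
qed

lemma has_sum_odd_pairs_iff:
  fixes G :: "int \<times> int \<Rightarrow> real"
  shows "((\<lambda>p. if even (fst p + snd p) then 0 else G p) has_sum X) UNIV \<longleftrightarrow>
         ((\<lambda>(a, b). G (a + b + 1, a - b)) has_sum X) UNIV"
proof -
  let ?O = "{p::int \<times> int. odd (fst p + snd p)}"
  have "((\<lambda>p. if even (fst p + snd p) then 0 else G p) has_sum X) UNIV \<longleftrightarrow> (G has_sum X) ?O"
    by (rule has_sum_cong_neutral) auto
  also have "\<dots> \<longleftrightarrow> ((\<lambda>(a, b). G (a + b + 1, a - b)) has_sum X) UNIV"
  proof (rule has_sum_reindex_bij_witness[symmetric, where j = "\<lambda>(a, b). (a + b + 1, a - b)"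
        and i = "\<lambda>(m, k). ((m + k - 1) div 2, (m - k - 1) div 2)"])
    fix p :: "int \<times> int" assume "p \<in> ?O"
    then obtain m k where p: "p = (m, k)" "odd (m + k)" by (cases p) auto
    then have "(m + k - 1) div 2 + (m - k - 1) div 2 + 1 = m" "(m + k - 1) div 2 - (m - k - 1) div 2 = k"
      by presburger+
    then show "(case (case p of (m, k) \<Rightarrow> ((m + k - 1) div 2, (m - k - 1) div 2)) of (a, b) \<Rightarrow> (a + b + 1, a - b)) = p"
      using p by simp
  next
    fix p :: "int \<times> int"
    obtain a b where p: "p = (a, b)" by (cases p)
    have "(a + b + 1 + (a - b) - 1) div 2 = a" "(a + b + 1 - (a - b) - 1) div 2 = b" by presburger+
    then show "(case (case p of (a, b) \<Rightarrow> (a + b + 1, a - b)) of (m, k) \<Rightarrow> ((m + k - 1) div 2, (m - k - 1) div 2)) = p"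
      using p by simp
    show "(case p of (a, b) \<Rightarrow> (a + b + 1, a - b)) \<in> ?O" using p by (simp; presburger)
  qed auto
  finally show ?thesis .
qed

lemma gauss_pair_even: "gauss u (x + y) * gauss u (x - y) = gauss (2 * u) x * gauss (2 * u) y"
  by (simp add: gauss_def exp_add[symmetric] power2_eq_square algebra_simps)

lemma gauss_pair_odd:
  "gauss u (x + y + 1) * gauss u (x - y) = gauss (2 * u) (x + 1/2) * gauss (2 * u) (y + 1/2)"
  by (simp add: gauss_def exp_add[symmetric] power2_eq_square algebra_simps)

text \<open>The substitution \<open>(m, k) = (a + b, a - b)\<close> or \<open>(a + b + 1, a - b)\<close>, according to the
  parity of \<open>m + k\<close>, turns a double Gaussian sum with parameter \<open>u\<close> into two with parameter \<open>2 u\<close>.\<close>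
lemma has_sum_gauss_pairs:
  fixes w :: "int \<Rightarrow> int \<Rightarrow> real"
  assumes even: "((\<lambda>(a, b). w (a + b) (a - b) * (gauss (2 * u) (of_int a) * gauss (2 * u) (of_int b))) has_sum S) UNIV"
    and odd: "((\<lambda>(a, b). w (a + b + 1) (a - b) * (gauss (2 * u) (of_int a + 1/2) * gauss (2 * u) (of_int b + 1/2)))
                has_sum S') UNIV"
  shows "((\<lambda>(m, k). w m k * (gauss u (of_int m) * gauss u (of_int k))) has_sum (S + S')) UNIV"
proof -
  let ?G = "\<lambda>(m, k). w m k * (gauss u (of_int m) * gauss u (of_int k))"
  have "((\<lambda>p. if even (fst p + snd p) then ?G p else 0) has_sum S) UNIV"
    using even by (subst has_sum_even_pairs_iff) (simp add: gauss_pair_even)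
  moreover have "((\<lambda>p. if even (fst p + snd p) then 0 else ?G p) has_sum S') UNIV"
    using odd by (subst has_sum_odd_pairs_iff) (simp add: gauss_pair_odd)
  ultimately have "((\<lambda>p. (if even (fst p + snd p) then ?G p else 0) + (if even (fst p + snd p) then 0 else ?G p))
                     has_sum (S + S')) UNIV"
    by (rule has_sum_add)
  moreover have "(\<lambda>p. (if even (fst p + snd p) then ?G p else 0) + (if even (fst p + snd p) then 0 else ?G p)) = ?G"
    by (simp add: fun_eq_iff)
  ultimately show ?thesis
    by simp
qed

lemma alt_sign_diff: "alt_sign (m - k) = alt_sign m * alt_sign k"
  by (auto simp: alt_sign_def)

lemma has_sum_theta_products:
  assumes "u > 0"
  shows "((\<lambda>(m, k). gauss u (of_int m) * gauss u (of_int k)) has_sum theta3_axis u * theta3_axis u) UNIV"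
    and "((\<lambda>(m, k). alt_sign m * gauss u (of_int m) * (alt_sign k * gauss u (of_int k)))
           has_sum theta4_axis u * theta4_axis u) UNIV"
    and "((\<lambda>(m, k). gauss u (of_int m) * (alt_sign k * gauss u (of_int k))) has_sum theta3_axis u * theta4_axis u) UNIV"
    and "((\<lambda>(m, k). gauss u (of_int m + 1/2) * gauss u (of_int k + 1/2)) has_sum theta2_axis u * theta2_axis u) UNIV"
  using has_sum_mult_real[OF summable_on_gauss[OF assms] summable_on_gauss[OF assms]]
    has_sum_mult_real[OF summable_on_alt_sign_gauss[OF assms] summable_on_alt_sign_gauss[OF assms]]
    has_sum_mult_real[OF summable_on_gauss[OF assms] summable_on_alt_sign_gauss[OF assms]]
    has_sum_mult_real[OF summable_on_gauss_shift[OF assms] summable_on_gauss_shift[OF assms]]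
  by (simp_all add: theta3_axis_def theta4_axis_def theta2_axis_def)

lemma theta3_sq_add_theta4_sq:
  assumes u: "u > 0"
  shows "theta3_axis u ^ 2 + theta4_axis u ^ 2 = 2 * theta3_axis (2 * u) ^ 2"
proof -
  let ?w = "\<lambda>m k. 1 + alt_sign m * alt_sign k"
  have "((\<lambda>(m, k). ?w m k * (gauss u (of_int m) * gauss u (of_int k)))
          has_sum (theta3_axis u * theta3_axis u + theta4_axis u * theta4_axis u)) UNIV"
    using has_sum_add[OF has_sum_theta_products(1,2)[OF u]] by (simp add: case_prod_unfold algebra_simps)
  moreover have "((\<lambda>(m, k). ?w m k * (gauss u (of_int m) * gauss u (of_int k)))
          has_sum (2 * (theta3_axis (2 * u) * theta3_axis (2 * u)) + 0)) UNIV"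
  proof (rule has_sum_gauss_pairs)
    show "((\<lambda>(a, b). ?w (a + b) (a - b) * (gauss (2 * u) (of_int a) * gauss (2 * u) (of_int b)))
            has_sum 2 * (theta3_axis (2 * u) * theta3_axis (2 * u))) UNIV"
    proof -
      have "?w (a + b) (a - b) = 2" for a b
        by (auto simp: alt_sign_def)
      then show ?thesis
        using has_sum_cmult_right[OF has_sum_theta_products(1), of "2 * u" 2] u by (simp add: case_prod_unfold)
    qed
    show "((\<lambda>(a, b). ?w (a + b + 1) (a - b) * (gauss (2 * u) (of_int a + 1/2) * gauss (2 * u) (of_int b + 1/2)))
            has_sum 0) UNIV"
      by (rule has_sum_0) (auto simp: alt_sign_def)
  qed
  ultimately show ?thesis
    using has_sum_unique by (fastforce simp: power2_eq_square)
qed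

lemma theta3_sq_sub_theta4_sq:
  assumes u: "u > 0"
  shows "theta3_axis u ^ 2 - theta4_axis u ^ 2 = 2 * theta2_axis (2 * u) ^ 2"
proof -
  let ?w = "\<lambda>m k. 1 - alt_sign m * alt_sign k"
  have "((\<lambda>(m, k). ?w m k * (gauss u (of_int m) * gauss u (of_int k)))
          has_sum (theta3_axis u * theta3_axis u - theta4_axis u * theta4_axis u)) UNIV"
    using has_sum_add[OF has_sum_theta_products(1)[OF u] has_sum_uminusI[OF has_sum_theta_products(2)[OF u]]]
    by (simp add: case_prod_unfold algebra_simps)
  moreover have "((\<lambda>(m, k). ?w m k * (gauss u (of_int m) * gauss u (of_int k)))
          has_sum (0 + 2 * (theta2_axis (2 * u) * theta2_axis (2 * u)))) UNIV"
  proof (rule has_sum_gauss_pairs)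
    show "((\<lambda>(a, b). ?w (a + b) (a - b) * (gauss (2 * u) (of_int a) * gauss (2 * u) (of_int b))) has_sum 0) UNIV"
      by (rule has_sum_0) (auto simp: alt_sign_def)
    show "((\<lambda>(a, b). ?w (a + b + 1) (a - b) * (gauss (2 * u) (of_int a + 1/2) * gauss (2 * u) (of_int b + 1/2)))
            has_sum 2 * (theta2_axis (2 * u) * theta2_axis (2 * u))) UNIV"
    proof -
      have "?w (a + b + 1) (a - b) = 2" for a b
        by (auto simp: alt_sign_def)
      then show ?thesis
        using has_sum_cmult_right[OF has_sum_theta_products(4), of "2 * u" 2] u by (simp add: case_prod_unfold)
    qed
  qed
  ultimately show ?thesis
    using has_sum_unique by (fastforce simp: power2_eq_square)
qed

lemma theta3_mult_theta4:
  assumes u: "u > 0"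
  shows "theta3_axis u * theta4_axis u = theta4_axis (2 * u) ^ 2"
proof -
  let ?w = "\<lambda>m k. alt_sign m + alt_sign k"
  have "((\<lambda>(m, k). ?w m k * (gauss u (of_int m) * gauss u (of_int k)))
          has_sum (theta3_axis u * theta4_axis u + theta3_axis u * theta4_axis u)) UNIV"
  proof -
    have swapped: "((\<lambda>(m, k). gauss u (of_int k) * (alt_sign m * gauss u (of_int m))) has_sum theta3_axis u * theta4_axis u) UNIV"
      using has_sum_theta_products(3)[OF u]
      by (subst has_sum_reindex_bij_witness[where i = prod.swap and j = prod.swap, symmetric]) auto
    show ?thesis
      using has_sum_add[OF swapped has_sum_theta_products(3)[OF u]] by (simp add: case_prod_unfold algebra_simps)
  qed
  moreover have "((\<lambda>(m, k). ?w m k * (gauss u (of_int m) * gauss u (of_int k)))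
          has_sum (2 * (theta4_axis (2 * u) * theta4_axis (2 * u)) + 0)) UNIV"
  proof (rule has_sum_gauss_pairs)
    show "((\<lambda>(a, b). ?w (a + b) (a - b) * (gauss (2 * u) (of_int a) * gauss (2 * u) (of_int b)))
            has_sum 2 * (theta4_axis (2 * u) * theta4_axis (2 * u))) UNIV"
    proof -
      have "?w (a + b) (a - b) = 2 * alt_sign a * alt_sign b" for a b
        by (simp add: alt_sign_add alt_sign_diff)
      then show ?thesis
        using has_sum_cmult_right[OF has_sum_theta_products(2), of "2 * u" 2] u
        by (simp add: case_prod_unfold mult_ac)
    qed
    show "((\<lambda>(a, b). ?w (a + b + 1) (a - b) * (gauss (2 * u) (of_int a + 1/2) * gauss (2 * u) (of_int b + 1/2)))
            has_sum 0) UNIV"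
      by (rule has_sum_0) (auto simp: alt_sign_def)
  qed
  ultimately show ?thesis
    using has_sum_unique by (fastforce simp: power2_eq_square)
qed

lemma theta3_axis_ge_1:
  assumes "u > 0"
  shows "theta3_axis u \<ge> 1"
proof -
  have "sum (\<lambda>m::int. gauss u (of_int m)) {0} \<le> theta3_axis u"
    unfolding theta3_axis_def
    by (rule finite_sum_le_infsum[OF summable_on_gauss[OF assms]]) (auto intro: less_imp_le)
  then show ?thesis
    by (simp add: gauss_def)
qed

lemma theta3_axis_pos: "u > 0 \<Longrightarrow> theta3_axis u > 0"
  using theta3_axis_ge_1[of u] by simp

lemma theta2_axis_pos:
  assumes "u > 0"
  shows "theta2_axis u > 0"
proof -
  have "sum (\<lambda>m::int. gauss u (of_int m + 1/2)) {0} \<le> theta2_axis u"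
    unfolding theta2_axis_def
    by (rule finite_sum_le_infsum[OF summable_on_gauss_shift[OF assms]]) (auto intro: less_imp_le)
  moreover have "sum (\<lambda>m::int. gauss u (of_int m + 1/2)) {0} = gauss u (1/2)"
    by simp
  ultimately show ?thesis
    using gauss_pos[of u "1/2"] by linarith
qed

lemma theta4_axis_eq:
  assumes u: "u > 0"
  shows "theta4_axis u = 2 * theta3_axis (4 * u) - theta3_axis u"
proof -
  have "((\<lambda>m::int. gauss u (of_int m) + alt_sign m * gauss u (of_int m)) has_sum (theta3_axis u + theta4_axis u)) UNIV"
    unfolding theta3_axis_def theta4_axis_def
    by (intro has_sum_add has_sum_infsum summable_on_gauss summable_on_alt_sign_gauss u)
  moreover have "(\<lambda>m::int. gauss u (of_int m) + alt_sign m * gauss u (of_int m)) =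
                 (\<lambda>m. if even m then 2 * gauss u (of_int m) else 0)"
    by (auto simp: alt_sign_def fun_eq_iff)
  ultimately have "((\<lambda>m. 2 * gauss u (of_int m)) has_sum (theta3_axis u + theta4_axis u)) {m::int. even m}"
    by (subst has_sum_cong_neutral[where T = UNIV and g = "\<lambda>m. if even m then 2 * gauss u (of_int m) else 0"]) auto
  also have "?this \<longleftrightarrow> ((\<lambda>j::int. 2 * gauss (4 * u) (of_int j)) has_sum (theta3_axis u + theta4_axis u)) UNIV"
    by (rule has_sum_reindex_bij_witness[symmetric, where j = "\<lambda>j. 2 * j" and i = "\<lambda>m. m div 2"])
       (auto simp: gauss_def power2_eq_square algebra_simps)
  finally have "((\<lambda>j::int. 2 * gauss (4 * u) (of_int j)) has_sum (theta3_axis u + theta4_axis u)) UNIV" .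
  moreover have "((\<lambda>j::int. 2 * gauss (4 * u) (of_int j)) has_sum (2 * theta3_axis (4 * u))) UNIV"
    unfolding theta3_axis_def using u by (intro has_sum_cmult_right has_sum_infsum summable_on_gauss) simp
  ultimately show ?thesis
    using has_sum_unique by fastforce
qed

lemma continuous_on_theta3_axis: "continuous_on {0<..} theta3_axis"
proof (rule continuous_at_imp_continuous_on, intro ballI)
  fix x :: real
  assume "x \<in> {0<..}"
  then have x: "x / 2 > 0"
    by simp
  have lim: "uniform_limit {x/2..} (\<lambda>X v. \<Sum>m\<in>X. gauss v (of_int m)) theta3_axis (finite_subsets_at_top UNIV)"
    unfolding theta3_axis_def[abs_def]
  proof (rule Weierstrass_m_test_general[where M = "\<lambda>m. gauss (x/2) (of_int m)"])
    show "norm (gauss v (of_int m)) \<le> gauss (x/2) (of_int m)" if "v \<in> {x/2..}" for m :: int and v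
    proof -
      have "pi * (x/2) * (real_of_int m)\<^sup>2 \<le> pi * v * (real_of_int m)\<^sup>2"
        using that by (intro mult_right_mono) auto
      then show ?thesis
        by (simp add: gauss_def)
    qed
  qed (rule summable_on_gauss[OF x])
  have "continuous_on {x/2..} theta3_axis"
    by (rule uniform_limit_theorem[OF _ lim]) (auto intro!: always_eventually continuous_intros simp: gauss_def)
  moreover have "x \<in> interior {x/2..}"
    using x by simp
  ultimately show "isCont theta3_axis x"
    by (rule continuous_on_interior)
qed

lemma continuous_on_theta4_axis: "continuous_on {0<..} theta4_axis"
proof -
  have "continuous_on {0<..} (\<lambda>u. 2 * theta3_axis (4 * u) - theta3_axis u)"
    by (intro continuous_intros continuous_on_compose2[OF continuous_on_theta3_axis]
        continuous_on_theta3_axis) auto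
  then show ?thesis
    by (rule continuous_on_cong[THEN iffD1, rotated -1]) (auto simp: theta4_axis_eq)
qed

text \<open>All terms but \<open>m = 0\<close> decay at least like \<open>exp (- pi (v - 1))\<close> relative to \<open>v = 1\<close>.\<close>
lemma theta3_axis_le:
  assumes v: "v \<ge> 1"
  shows "theta3_axis v \<le> 1 + exp (- (pi * (v - 1))) * (theta3_axis 1 - 1)"
proof -
  define c where "c = exp (- (pi * (v - 1)))"
  define h where "h m = c * gauss 1 (of_int m) - gauss v (of_int m)" for m :: int
  have total: "(h has_sum (c * theta3_axis 1 - theta3_axis v)) UNIV"
    using has_sum_add[OF has_sum_cmult_right[OF has_sum_infsum[OF summable_on_gauss[of 1]], of c]
        has_sum_uminusI[OF has_sum_infsum[OF summable_on_gauss[of v]]]] v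
    by (simp add: h_def[abs_def] theta3_axis_def)
  have zero_term: "(h has_sum (c - 1)) {0}"
    using has_sum_finite[of "{0::int}" h] by (simp add: h_def gauss_def)
  have nonneg: "h m \<ge> 0" if "m \<noteq> 0" for m
  proof -
    have "1 \<le> (real_of_int m)\<^sup>2"
      using that int_abs_le_square[of m] by (smt (verit) of_int_1_le_iff of_int_power zero_less_abs_iff)
    then have "pi * ((v - 1) * 1) \<le> pi * ((v - 1) * (real_of_int m)\<^sup>2)"
      using v by (intro mult_left_mono) auto
    then have "gauss v (of_int m) \<le> c * gauss 1 (of_int m)"
      by (simp add: c_def gauss_def exp_add[symmetric] algebra_simps)
    then show ?thesis
      by (simp add: h_def)
  qed
  have "c - 1 \<le> c * theta3_axis 1 - theta3_axis v"
    by (rule has_sum_mono'[OF zero_term total]) (auto intro: nonneg)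
  then show ?thesis
    by (simp add: c_def algebra_simps)
qed

lemma tendsto_theta3_axis: "(theta3_axis \<longlongrightarrow> 1) at_top"
proof (rule tendsto_sandwich[where f = "\<lambda>_. 1" and h = "\<lambda>v. 1 + exp (- (pi * (v - 1))) * (theta3_axis 1 - 1)"])
  show "\<forall>\<^sub>F v in at_top. 1 \<le> theta3_axis v"
    by (rule eventually_at_top_linorder[THEN iffD2]) (auto intro!: exI[of _ 1] theta3_axis_ge_1)
  show "\<forall>\<^sub>F v in at_top. theta3_axis v \<le> 1 + exp (- (pi * (v - 1))) * (theta3_axis 1 - 1)"
    by (rule eventually_at_top_linorder[THEN iffD2]) (auto intro!: exI[of _ 1] theta3_axis_le)
  have "LIM v at_top. (v - 1::real) :> at_top"
    using filterlim_tendsto_add_at_top[OF tendsto_const[of "-1::real"] filterlim_ident[of "at_top::real filter"]] by simp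
  then have "LIM v at_top. pi * (v - 1) :> at_top"
    by (rule filterlim_tendsto_pos_mult_at_top[OF tendsto_const pi_gt_zero])
  then have "LIM v at_top. - (pi * (v - 1)) :> at_bot"
    by (simp add: filterlim_uminus_at_bot)
  then have decay: "((\<lambda>v. exp (- (pi * (v - 1)))) \<longlongrightarrow> 0) at_top"
    by (rule filterlim_compose[OF exp_at_bot])
  then show "((\<lambda>v. 1 + exp (- (pi * (v - 1))) * (theta3_axis 1 - 1)) \<longlongrightarrow> 1) at_top"
    using tendsto_add[OF tendsto_const[of 1] tendsto_mult[OF decay tendsto_const[of "theta3_axis 1 - 1"]]] by simp
qed simp

lemma tendsto_theta4_axis: "(theta4_axis \<longlongrightarrow> 1) at_top"
proof -
  have "filterlim (\<lambda>v::real. 4 * v) at_top at_top"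
    by (intro filterlim_tendsto_pos_mult_at_top[OF tendsto_const _ filterlim_ident]) simp
  then have "((\<lambda>v. 2 * theta3_axis (4 * v) - theta3_axis v) \<longlongrightarrow> 2 * 1 - 1) at_top"
    by (intro tendsto_intros filterlim_compose[OF tendsto_theta3_axis] tendsto_theta3_axis)
  moreover have "\<forall>\<^sub>F v in at_top. 2 * theta3_axis (4 * v) - theta3_axis v = theta4_axis v"
    by (rule eventually_at_top_linorder[THEN iffD2]) (auto intro!: exI[of _ 1] simp: theta4_axis_eq)
  ultimately show ?thesis
    by (simp add: tendsto_cong)
qed

lemma theta4_axis_nonneg:
  assumes "u > 0"
  shows "theta4_axis u \<ge> 0"
proof -
  have "theta3_axis u * theta4_axis u \<ge> 0"
    using theta3_mult_theta4[OF assms] by simp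
  then show ?thesis
    using theta3_axis_pos[OF assms] by (simp add: zero_le_mult_iff)
qed

lemma theta4_axis_less_theta3_axis:
  assumes "u > 0"
  shows "theta4_axis u < theta3_axis u"
proof -
  have "0 < 2 * theta2_axis (2 * u) ^ 2"
    using theta2_axis_pos[of "2 * u"] assms by simp
  then have "theta4_axis u ^ 2 < theta3_axis u ^ 2"
    using theta3_sq_sub_theta4_sq[OF assms] by linarith
  then show ?thesis
    by (rule power_less_imp_less_base) (use theta3_axis_pos[OF assms] in simp)
qed

text \<open>If \<open>theta4_axis u = 0\<close> then, by \<open>theta3_mult_theta4\<close>, also \<open>theta4_axis (2^k u) = 0\<close> for all \<open>k\<close>,
  contradicting \<open>theta4_axis \<longrightarrow> 1\<close>.\<close>
lemma theta4_axis_pos: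
  assumes u: "u > 0"
  shows "theta4_axis u > 0"
proof (rule ccontr)
  assume "\<not> theta4_axis u > 0"
  then have "theta4_axis u = 0"
    using theta4_axis_nonneg[OF u] by simp
  then have zero: "theta4_axis (2 ^ k * u) = 0" for k :: nat
  proof (induction k)
    case (Suc k)
    then have "theta4_axis (2 * (2 ^ k * u)) ^ 2 = 0"
      using theta3_mult_theta4[of "2 ^ k * u"] u by simp
    then show ?case
      by (simp add: mult.assoc)
  qed simp
  obtain N where N: "\<And>v. v \<ge> N \<Longrightarrow> 1/2 < theta4_axis v"
    using order_tendstoD(1)[OF tendsto_theta4_axis, of "1/2"] by (auto simp: eventually_at_top_linorder)
  obtain k :: nat where "N / u < 2 ^ k"
    using real_arch_pow[of 2 "N / u"] by auto
  then have "N \<le> 2 ^ k * u"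
    using u by (simp add: pos_divide_less_eq less_imp_le)
  then have "1/2 < theta4_axis (2 ^ k * u)"
    by (rule N)
  then show False
    using zero[of k] by simp
qed

definition theta_quotient :: "real \<Rightarrow> real" where
  "theta_quotient u = (theta4_axis u / theta3_axis u)\<^sup>2"

lemma theta_quotient_pos: "u > 0 \<Longrightarrow> theta_quotient u > 0"
  using theta4_axis_pos[of u] theta3_axis_pos[of u] by (simp add: theta_quotient_def)

lemma theta_quotient_less_1:
  assumes "u > 0"
  shows "theta_quotient u < 1"
proof -
  have "0 \<le> theta4_axis u / theta3_axis u" "theta4_axis u / theta3_axis u < 1"
    using theta4_axis_nonneg[OF assms] theta4_axis_less_theta3_axis[OF assms] theta3_axis_pos[OF assms]
    by auto
  then show ?thesis
    by (simp add: theta_quotient_def power_less_one_iff)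
qed

lemma sqrt_theta_quotient:
  "u > 0 \<Longrightarrow> sqrt (theta_quotient u) = theta4_axis u / theta3_axis u"
  using theta4_axis_nonneg[of u] theta3_axis_pos[of u] by (simp add: theta_quotient_def)

lemma theta_quotient_double:
  assumes u: "u > 0"
  shows "theta_quotient (2 * u) = 2 * sqrt (theta_quotient u) / (1 + theta_quotient u)"
proof -
  define a b where "a = theta3_axis u" and "b = theta4_axis u"
  have "a > 0"
    using theta3_axis_pos[OF u] by (simp add: a_def)
  have "theta_quotient (2 * u) = theta4_axis (2 * u) ^ 2 / theta3_axis (2 * u) ^ 2"
    by (simp add: theta_quotient_def power_divide)
  also have "\<dots> = 2 * a * b / (a\<^sup>2 + b\<^sup>2)"
    using theta3_mult_theta4[OF u] theta3_sq_add_theta4_sq[OF u] by (simp add: a_def b_def)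
  also have "\<dots> = 2 * (b / a) / (1 + (b / a)\<^sup>2)"
    using \<open>a > 0\<close> by (simp add: field_simps power2_eq_square)
  finally show ?thesis
    using sqrt_theta_quotient[OF u] by (simp add: a_def b_def theta_quotient_def)
qed

lemma theta_quotient_le_double_sq:
  assumes u: "u > 0"
  shows "theta_quotient u \<le> theta_quotient (2 * u) ^ 2"
proof -
  define s where "s = sqrt (theta_quotient u)"
  have s: "0 \<le> s" "s < 1" "theta_quotient u = s\<^sup>2"
    using theta_quotient_pos[OF u] theta_quotient_less_1[OF u] by (auto simp: s_def)
  have "s * s\<^sup>2 \<le> s * 1"
    using s by (intro mult_left_mono) (auto intro: power_le_one)
  then have "s * (1 + s\<^sup>2) \<le> 2 * s"
    by (simp add: algebra_simps)
  then have "s \<le> theta_quotient (2 * u)"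
    using s by (simp add: theta_quotient_double[OF u] s_def[symmetric] le_divide_eq add_pos_nonneg)
  then show ?thesis
    using s by (simp add: power_mono)
qed

lemma theta_quotient_le_power:
  assumes u: "u > 0"
  shows "theta_quotient (u / 2 ^ k) \<le> theta_quotient u ^ 2 ^ k"
proof (induction k)
  case (Suc k)
  have "theta_quotient (u / 2 ^ Suc k) \<le> theta_quotient (2 * (u / 2 ^ Suc k)) ^ 2"
    using u by (intro theta_quotient_le_double_sq) simp
  also have "\<dots> = theta_quotient (u / 2 ^ k) ^ 2"
    by simp
  also have "\<dots> \<le> (theta_quotient u ^ 2 ^ k) ^ 2"
    using Suc.IH by (intro power_mono) (simp_all add: theta_quotient_def)
  finally show ?case
    by (simp add: power_mult[symmetric] mult.commute)
qed simp

lemma continuous_on_theta_quotient: "continuous_on {0<..} theta_quotient"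
  unfolding theta_quotient_def[abs_def]
  by (intro continuous_intros continuous_on_theta4_axis continuous_on_theta3_axis) (auto dest: theta3_axis_pos)

lemma tendsto_theta_quotient: "(theta_quotient \<longlongrightarrow> 1) at_top"
  unfolding theta_quotient_def[abs_def]
  using tendsto_power[OF tendsto_divide[OF tendsto_theta4_axis tendsto_theta3_axis], of 2] by simp

lemma image_theta_quotient: "theta_quotient ` {0<..} = {0<..<1}"
proof
  show "theta_quotient ` {0<..} \<subseteq> {0<..<1}"
    using theta_quotient_pos theta_quotient_less_1 by auto
  show "{0<..<1} \<subseteq> theta_quotient ` {0<..}"
  proof
    fix y :: real
    assume y: "y \<in> {0<..<1}"
    obtain k :: nat where k: "theta_quotient 1 ^ k < y"
      using real_arch_pow_inv[of y "theta_quotient 1"] y theta_quotient_less_1[of 1] by auto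
    have "theta_quotient (1 / 2 ^ k) \<le> theta_quotient 1 ^ 2 ^ k"
      by (rule theta_quotient_le_power) simp
    also have "\<dots> \<le> theta_quotient 1 ^ k"
      using theta_quotient_pos[of 1] theta_quotient_less_1[of 1]
      by (intro power_decreasing) (auto intro: less_imp_le[OF less_exp])
    finally have small: "theta_quotient (1 / 2 ^ k) \<le> y"
      using k by simp
    obtain N where N: "\<And>v. v \<ge> N \<Longrightarrow> y < theta_quotient v"
      using order_tendstoD(1)[OF tendsto_theta_quotient, of y] y by (auto simp: eventually_at_top_linorder)
    have large: "y \<le> theta_quotient (max N 1)"
      using N[of "max N 1"] by simp
    have "connected (theta_quotient ` {0<..})"
      by (intro connected_continuous_image continuous_on_theta_quotient connected_Ioi)
    moreover have "theta_quotient (1 / 2 ^ k) \<in> theta_quotient ` {0<..}"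
      and "theta_quotient (max N 1) \<in> theta_quotient ` {0<..}"
      by auto
    ultimately show "y \<in> theta_quotient ` {0<..}"
      using connected_contains_Icc small large by fastforce
  qed
qed

lemma theta_axis_double:
  assumes u: "u > 0"
  shows "theta3_axis (2 * u) = theta3_axis u / sqrt 2 * sqrt (1 + theta_quotient u)"
    and "theta2_axis (2 * u) = theta3_axis u / sqrt 2 * sqrt (1 - theta_quotient u)"
proof -
  define a where "a = theta3_axis u"
  have a: "a > 0"
    using theta3_axis_pos[OF u] by (simp add: a_def)
  have t: "theta4_axis u ^ 2 = a\<^sup>2 * theta_quotient u"
    using a by (simp add: theta_quotient_def a_def power_divide)
  have "theta3_axis (2 * u) = sqrt (theta3_axis (2 * u) ^ 2)"
    using theta3_axis_pos[of "2 * u"] u by simp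
  also have "theta3_axis (2 * u) ^ 2 = a\<^sup>2 * ((1 + theta_quotient u) / 2)"
    using theta3_sq_add_theta4_sq[OF u] t by (simp add: a_def algebra_simps)
  finally show "theta3_axis (2 * u) = a / sqrt 2 * sqrt (1 + theta_quotient u)"
    using a by (simp add: real_sqrt_mult real_sqrt_divide)
  have "theta2_axis (2 * u) = sqrt (theta2_axis (2 * u) ^ 2)"
    using theta2_axis_pos[of "2 * u"] u by simp
  also have "theta2_axis (2 * u) ^ 2 = a\<^sup>2 * ((1 - theta_quotient u) / 2)"
    using theta3_sq_sub_theta4_sq[OF u] t by (simp add: a_def algebra_simps)
  finally show "theta2_axis (2 * u) = a / sqrt 2 * sqrt (1 - theta_quotient u)"
    using a by (simp add: real_sqrt_mult real_sqrt_divide)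
qed

section \<open>Binary linear codes\<close>

lemma word_add_cancel: "word_add (word_add x y) y = x"
  by (auto simp: word_add_def vec_eq_iff)

lemma card_Diff_add_card_Int:
  assumes "finite A"
  shows "card (A - B) + card (A \<inter> B) = card A"
proof -
  have "card ((A - B) \<union> (A \<inter> B)) = card (A - B) + card (A \<inter> B)"
    using assms by (intro card_Un_disjoint) auto
  then show ?thesis
    by (simp add: Un_Diff_Int)
qed

lemma even_card_sym_diff:
  assumes "finite A" "finite B"
  shows "even (card (sym_diff A B)) \<longleftrightarrow> (even (card A) \<longleftrightarrow> even (card B))"
proof -
  have "card (sym_diff A B) = card (A - B) + card (B - A)"
    using assms by (intro card_Un_disjoint) auto
  moreover have "card A = card (A - B) + card (A \<inter> B)" "card B = card (B - A) + card (A \<inter> B)"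
    using card_Diff_add_card_Int[of A B] card_Diff_add_card_Int[of B A] assms by (simp_all add: Int_commute)
  ultimately show ?thesis
    by (auto simp: even_add)
qed

definition word_char :: "bool^'n \<Rightarrow> bool^'n \<Rightarrow> int" where
  "word_char c y = (if even (card {i. c$i \<and> y$i}) then 1 else -1)"

lemma word_char_add_left: "word_char (word_add c d) y = word_char c y * word_char d y"
proof -
  have "{i. word_add c d $ i \<and> y$i} = sym_diff {i. c$i \<and> y$i} {i. d$i \<and> y$i}"
    by (auto simp: word_add_def)
  then show ?thesis
    using even_card_sym_diff[of "{i. c$i \<and> y$i}" "{i. d$i \<and> y$i}"] by (auto simp: word_char_def)
qed

lemma word_char_commute: "word_char c y = word_char y c"
  unfolding word_char_def by (metis (mono_tags, lifting) Collect_cong)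

lemma word_char_add_right: "word_char c (word_add y z) = word_char c y * word_char c z"
  using word_char_add_left[of y z c] by (simp add: word_char_commute)

lemma sum_word_char_UNIV:
  fixes c :: "bool^'n"
  assumes "c \<noteq> zero_word"
  shows "(\<Sum>y\<in>UNIV. word_char c y) = 0"
proof -
  obtain j where "c$j"
    using assms by (auto simp: zero_word_def vec_eq_iff)
  define e :: "bool^'n" where "e = (\<chi> i. i = j)"
  have "{i. c$i \<and> e$i} = {j}"
    using \<open>c$j\<close> by (auto simp: e_def)
  then have ce: "word_char c e = -1"
    by (simp add: word_char_def)
  have "(\<Sum>y\<in>UNIV. - word_char c y) = (\<Sum>y\<in>UNIV. word_char c y)"
    by (rule sum.reindex_bij_witness[where i = "\<lambda>y. word_add y e" and j = "\<lambda>y. word_add y e"])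
       (auto simp: word_add_cancel word_char_add_right ce)
  then show ?thesis
    by (simp add: sum_negf)
qed

lemma sum_word_char_zero: "(\<Sum>y\<in>UNIV. word_char (zero_word :: bool^'n::finite) y) = 2 ^ CARD('n)"
  using CARD_vec[where 'a = bool and 'b = 'n] by (simp add: word_char_def zero_word_def)

lemma sum_word_char_code:
  assumes C: "binary_linear_code C" and y: "y \<notin> dual_code C"
  shows "(\<Sum>c\<in>C. word_char c y) = 0"
proof -
  obtain c0 where c0: "c0 \<in> C" "word_char c0 y = -1"
    using y by (auto simp: dual_code_def word_char_def)
  have "(\<Sum>c\<in>C. - word_char c y) = (\<Sum>c\<in>C. word_char c y)"
    using C by (intro sum.reindex_bij_witness[where i = "\<lambda>c. word_add c c0" and j = "\<lambda>c. word_add c c0"])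
       (auto simp: word_add_cancel word_char_add_left c0 binary_linear_code_def)
  then show ?thesis
    by (simp add: sum_negf)
qed

text \<open>Double counting of \<open>\<Sum>c\<in>C. \<Sum>y. word_char c y\<close>: the inner sums over \<open>y\<close> vanish except
  for \<open>c = 0\<close>, the sums over \<open>c\<in>C\<close> vanish except for \<open>y \<in> dual_code C\<close>.\<close>
lemma card_mult_card_dual_code:
  fixes C :: "(bool^'n::finite) set"
  assumes C: "binary_linear_code C"
  shows "card C * card (dual_code C) = 2 ^ CARD('n)"
proof -
  have "(\<Sum>y\<in>UNIV. \<Sum>c\<in>C. word_char c y) = (\<Sum>y\<in>dual_code C. int (card C))"
  proof -
    have "(\<Sum>c\<in>C. word_char c y) = (if y \<in> dual_code C then int (card C) else 0)" for y
      using sum_word_char_code[OF C, of y] by (auto simp: dual_code_def word_char_def)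
    then show ?thesis
      by (simp add: sum.If_cases)
  qed
  moreover have "(\<Sum>c\<in>C. \<Sum>y\<in>UNIV. word_char c y) = (\<Sum>c\<in>{zero_word}. int (2 ^ CARD('n)))"
  proof -
    have "(\<Sum>y\<in>UNIV. word_char c y) = (if c = zero_word then int (2 ^ CARD('n)) else 0)"
      for c :: "bool^'n"
      using sum_word_char_UNIV[of c] sum_word_char_zero by auto
    moreover have "zero_word \<in> C"
      using C by (simp add: binary_linear_code_def)
    ultimately show ?thesis
      by (simp add: sum.delta)
  qed
  moreover have "(\<Sum>y\<in>UNIV. \<Sum>c\<in>C. word_char c y) = (\<Sum>c\<in>C. \<Sum>y\<in>UNIV. word_char c y)"
    by (rule sum.swap)
  ultimately have "int (card (dual_code C) * card C) = int (2 ^ CARD('n))"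
    by simp
  then show ?thesis
    by (simp only: of_nat_eq_iff mult.commute)
qed

lemma hamming_weight_le: "hamming_weight (c :: bool^'n) \<le> CARD('n)"
  unfolding hamming_weight_def by (rule card_mono) auto

lemma card_eq_sum_weight_dist: "card (C :: (bool^'n) set) = (\<Sum>w = 0..CARD('n). weight_dist C w)"
proof -
  have "(\<Sum>w\<in>{0..CARD('n)}. sum (\<lambda>_. 1::nat) {c\<in>C. hamming_weight c = w}) = sum (\<lambda>_. 1) C"
    by (intro sum.group) (auto simp: hamming_weight_le)
  then show ?thesis
    by (simp add: weight_dist_def)
qed

lemma card_formally_self_dual:
  fixes C :: "(bool^'n) set"
  assumes "formally_self_dual C"
  shows "card C * card C = 2 ^ CARD('n)"
  using assms card_mult_card_dual_code[of C] card_eq_sum_weight_dist[of C] card_eq_sum_weight_dist[of "dual_code C"]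
  by (simp add: formally_self_dual_def)

definition information_set :: "(bool^'n) set \<Rightarrow> 'n set \<Rightarrow> bool" where
  "information_set C I \<longleftrightarrow> (\<forall>v::'n \<Rightarrow> bool. \<exists>!c\<in>C. \<forall>i\<in>I. c$i = v i)"

definition free_coordinates :: "(bool^'n) set \<Rightarrow> 'n set \<Rightarrow> bool" where
  "free_coordinates C I \<longleftrightarrow> (\<forall>v::'n \<Rightarrow> bool. \<exists>c\<in>C. \<forall>i\<in>I. c$i = v i)"

lemma information_set_iff:
  fixes C :: "(bool^'n) set"
  shows "information_set C I \<longleftrightarrow> free_coordinates C I \<and> (\<forall>c\<in>C. \<forall>d\<in>C. (\<forall>i\<in>I. c$i = d$i) \<longrightarrow> c = d)"
proof (intro iffI conjI ballI impI)
  assume I: "information_set C I"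
  then show "free_coordinates C I"
    unfolding information_set_def free_coordinates_def by blast
  fix c d
  assume "c \<in> C" "d \<in> C" "\<forall>i\<in>I. c$i = d$i"
  moreover have "\<exists>!c'. c' \<in> C \<and> (\<forall>i\<in>I. c'$i = d$i)"
    using I by (simp add: information_set_def)
  ultimately show "c = d"
    using the1_equality[of "\<lambda>c'. c' \<in> C \<and> (\<forall>i\<in>I. c'$i = d$i)"] by metis
next
  assume I: "free_coordinates C I \<and> (\<forall>c\<in>C. \<forall>d\<in>C. (\<forall>i\<in>I. c$i = d$i) \<longrightarrow> c = d)"
  show "information_set C I"
    unfolding information_set_def
  proof
    fix v :: "'n \<Rightarrow> bool"
    obtain c where "c \<in> C" "\<forall>i\<in>I. c$i = v i"
      using I unfolding free_coordinates_def by blast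
    then show "\<exists>!c. c \<in> C \<and> (\<forall>i\<in>I. c$i = v i)"
      using I by (intro ex1I[of _ c]) auto
  qed
qed

lemma information_set_unique:
  "information_set C I \<Longrightarrow> c \<in> C \<Longrightarrow> d \<in> C \<Longrightarrow> \<forall>i\<in>I. c$i = d$i \<Longrightarrow> c = d"
  by (simp add: information_set_iff)

lemma free_coordinates_insert:
  fixes C :: "(bool^'n) set"
  assumes C: "binary_linear_code C" and I: "free_coordinates C I"
    and e: "e \<in> C" "e$j" "\<forall>i\<in>I. \<not> e$i"
  shows "free_coordinates C (insert j I)"
  unfolding free_coordinates_def
proof
  fix v :: "'n \<Rightarrow> bool"
  obtain c where c: "c \<in> C" "\<forall>i\<in>I. c$i = v i"
    using I by (auto simp: free_coordinates_def)
  show "\<exists>c\<in>C. \<forall>i\<in>insert j I. c$i = v i"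
  proof (cases "c$j = v j")
    case False
    have "word_add c e \<in> C"
      using C c e by (simp add: binary_linear_code_def)
    then show ?thesis
      using False c e by (intro bexI[of _ "word_add c e"]) (auto simp: word_add_def)
  qed (use c in auto)
qed

text \<open>A set of free coordinates of maximal size is an information set: two codewords agreeing
  on it differ by a codeword vanishing on it, and a coordinate where that difference is nonzero
  could be added to it.\<close>
lemma information_set_exists:
  fixes C :: "(bool^'n) set"
  assumes C: "binary_linear_code C"
  shows "\<exists>I. information_set C I"
proof -
  have "card J < CARD('n) + 1" for J :: "'n set"
    using card_mono[of UNIV J] by simp
  moreover have "free_coordinates C {}"
    using C by (auto simp: binary_linear_code_def free_coordinates_def)
  ultimately obtain I where I: "free_coordinates C I" and max: "\<And>J. free_coordinates C J \<Longrightarrow> card J \<le> card I"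
    using Lattices_Big.ex_has_greatest_nat[of "free_coordinates C" "{}" card "CARD('n) + 1"] by blast
  have "c = d" if c: "c \<in> C" and d: "d \<in> C" and agree: "\<forall>i\<in>I. c$i = d$i" for c d
  proof (rule ccontr)
    assume "c \<noteq> d"
    then obtain j where j: "c$j \<noteq> d$j"
      by (auto simp: vec_eq_iff)
    have "word_add c d \<in> C" "word_add c d $ j" "\<forall>i\<in>I. \<not> word_add c d $ i"
      using C c d agree j by (auto simp: word_add_def binary_linear_code_def)
    then have "card (insert j I) \<le> card I"
      by (intro max free_coordinates_insert[OF C I])
    then show False
      using agree j by (simp add: card_insert_if split: if_splits)
  qed
  then show ?thesis
    using I by (auto simp: information_set_iff)
qed

lemma card_information_set:
  assumes "information_set C I"
  shows "card C = 2 ^ card I"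
proof -
  have "bij_betw (\<lambda>c. restrict (vec_nth c) I) C (PiE I (\<lambda>_. UNIV :: bool set))"
  proof (rule bij_betw_imageI)
    show "inj_on (\<lambda>c. restrict (vec_nth c) I) C"
      using assms unfolding information_set_def by (intro inj_onI) (metis restrict_apply')
    show "(\<lambda>c. restrict (vec_nth c) I) ` C = PiE I (\<lambda>_. UNIV)"
    proof (intro subset_antisym subsetI)
      fix f
      assume f: "f \<in> PiE I (\<lambda>_. UNIV :: bool set)"
      obtain c where c: "c \<in> C" "\<forall>i\<in>I. c$i = f i"
        using assms unfolding information_set_def by blast
      then have "restrict (vec_nth c) I = f"
        using f by (auto simp: restrict_def PiE_def extensional_def fun_eq_iff)
      then show "f \<in> (\<lambda>c. restrict (vec_nth c) I) ` C"
        using c by blast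
    qed auto
  qed
  then have "card C = card (PiE I (\<lambda>_. UNIV :: bool set))"
    by (rule bij_betw_same_card)
  then show ?thesis
    by (simp add: card_PiE)
qed

lemma card_information_set_formally_self_dual:
  fixes C :: "(bool^'n) set"
  assumes "formally_self_dual C" "information_set C I"
  shows "CARD('n) = 2 * card I"
proof -
  have "(2::nat) ^ (2 * card I) = 2 ^ CARD('n)"
    using card_formally_self_dual[OF assms(1)] card_information_set[OF assms(2)]
    by (simp add: power_add[symmetric] mult_2)
  then show ?thesis
    by simp
qed

section \<open>The Construction A lattice\<close>

definition parity_word :: "int^'n \<Rightarrow> bool^'n" where
  "parity_word x = (\<chi> j. odd (x$j))"

definition constructionA_int :: "(bool^'n) set \<Rightarrow> (int^'n) set" where
  "constructionA_int C = {x. parity_word x \<in> C}"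

lemma embed_word_add_int_vec:
  "embed_word c + 2 *\<^sub>R int_vec z = int_vec (\<chi> j. (if c$j then 1 else 0) + 2 * z$j)"
  by (simp add: embed_word_def int_vec_def vec_eq_iff)

lemma constructionA_eq_image: "constructionA C = (\<lambda>x. (1 / sqrt 2) *\<^sub>R int_vec x) ` constructionA_int C"
proof (intro subset_antisym subsetI)
  fix v
  assume "v \<in> constructionA C"
  then obtain c z where v: "v = (1 / sqrt 2) *\<^sub>R (embed_word c + 2 *\<^sub>R int_vec z)" and "c \<in> C"
    by (auto simp: constructionA_def)
  moreover have "parity_word (\<chi> j. (if c$j then 1 else 0) + 2 * z$j) = c"
    by (simp add: parity_word_def vec_eq_iff)
  ultimately show "v \<in> (\<lambda>x. (1 / sqrt 2) *\<^sub>R int_vec x) ` constructionA_int C"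
    by (auto simp: embed_word_add_int_vec constructionA_int_def)
next
  fix v
  assume "v \<in> (\<lambda>x. (1 / sqrt 2) *\<^sub>R int_vec x) ` constructionA_int C"
  then obtain x where x: "parity_word x \<in> C" and v: "v = (1 / sqrt 2) *\<^sub>R int_vec x"
    by (auto simp: constructionA_int_def)
  have "(if odd (x$j) then 1 else 0) + 2 * (x$j div 2) = x$j" for j
    by presburger
  then have "(\<chi> j. (if parity_word x $ j then 1 else 0) + 2 * (x$j div 2)) = x"
    by (simp add: parity_word_def vec_eq_iff)
  then have "int_vec x = embed_word (parity_word x) + 2 *\<^sub>R int_vec (\<chi> j. x$j div 2)"
    by (simp add: embed_word_add_int_vec)
  then show "v \<in> constructionA C"
    using x v by (auto simp: constructionA_def)
qed

lemma parity_word_add: "parity_word (x + y) = word_add (parity_word x) (parity_word y)"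
  by (simp add: parity_word_def word_add_def vec_eq_iff)

lemma parity_word_scale: "parity_word (k *s x) = (if even k then zero_word else parity_word x)"
  by (simp add: parity_word_def zero_word_def vec_eq_iff)

lemma constructionA_int_add:
  "binary_linear_code C \<Longrightarrow> x \<in> constructionA_int C \<Longrightarrow> y \<in> constructionA_int C \<Longrightarrow> x + y \<in> constructionA_int C"
  by (simp add: constructionA_int_def parity_word_add binary_linear_code_def)

lemma constructionA_int_scale:
  "binary_linear_code C \<Longrightarrow> x \<in> constructionA_int C \<Longrightarrow> k *s x \<in> constructionA_int C"
  by (simp add: constructionA_int_def parity_word_scale binary_linear_code_def)

lemma constructionA_int_lincomb:
  fixes r :: "'i \<Rightarrow> int^'n"
  assumes C: "binary_linear_code C" and "finite S" and "\<And>i. i \<in> S \<Longrightarrow> r i \<in> constructionA_int C"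
  shows "(\<Sum>i\<in>S. z i *s r i) \<in> constructionA_int C"
  using assms(2,3)
proof (induction S rule: finite_induct)
  case empty
  have "parity_word (0 :: int^'n) = zero_word"
    by (simp add: parity_word_def zero_word_def vec_eq_iff)
  then show ?case
    using C by (simp add: constructionA_int_def binary_linear_code_def)
next
  case (insert i S)
  then show ?case
    using C by (simp add: constructionA_int_add constructionA_int_scale)
qed

lemma vector_matrix_mult_eq_sum_rows: "z v* A = (\<Sum>i\<in>UNIV. z$i *s A$i)"
  unfolding vec_eq_iff vector_matrix_mult_def by (simp add: sum_component mult.commute)

definition info_word :: "(bool^'n) set \<Rightarrow> 'n set \<Rightarrow> 'n \<Rightarrow> bool^'n" where
  "info_word C I i = (THE c. c \<in> C \<and> (\<forall>j\<in>I. c$j = (j = i)))"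

lemma info_word:
  assumes "information_set C I"
  shows "info_word C I i \<in> C" "\<And>j. j \<in> I \<Longrightarrow> info_word C I i $ j = (j = i)"
proof -
  have "\<exists>!c. c \<in> C \<and> (\<forall>j\<in>I. c$j = (j = i))"
    using assms unfolding information_set_def by (rule allE[of _ "\<lambda>j. j = i"])
  from theI'[OF this] show "info_word C I i \<in> C" "\<And>j. j \<in> I \<Longrightarrow> info_word C I i $ j = (j = i)"
    unfolding info_word_def by auto
qed

definition constructionA_basis :: "(bool^'n) set \<Rightarrow> 'n set \<Rightarrow> int^'n^'n" where
  "constructionA_basis C I =
     (\<chi> i j. if i \<in> I then (if info_word C I i $ j then 1 else 0) else (if j = i then 2 else 0))"

lemma constructionA_basis_row_mem:
  assumes C: "binary_linear_code C" and I: "information_set C I"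
  shows "constructionA_basis C I $ i \<in> constructionA_int C"
proof (cases "i \<in> I")
  case True
  then have "parity_word (constructionA_basis C I $ i) = info_word C I i"
    by (simp add: parity_word_def constructionA_basis_def vec_eq_iff)
  then show ?thesis
    using info_word(1)[OF I] by (simp add: constructionA_int_def)
next
  case False
  then have "parity_word (constructionA_basis C I $ i) = zero_word"
    by (simp add: parity_word_def constructionA_basis_def zero_word_def vec_eq_iff)
  then show ?thesis
    using C by (simp add: constructionA_int_def binary_linear_code_def)
qed

lemma constructionA_basis_in_info:
  assumes "information_set C I" "i \<in> I" "j \<in> I"
  shows "constructionA_basis C I $ i $ j = (if j = i then 1 else 0)"
  using info_word(2)[OF assms(1,3), of i] assms(2) by (simp add: constructionA_basis_def)

lemma sum_info_rows_nth:
  assumes "information_set C I" "j \<in> I"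
  shows "(\<Sum>i\<in>I. x$i *s constructionA_basis C I $ i) $ j = x$j"
proof -
  have "(\<Sum>i\<in>I. x$i *s constructionA_basis C I $ i) $ j = (\<Sum>i\<in>I. if i = j then x$i else 0)"
    unfolding sum_component using constructionA_basis_in_info[OF assms(1) _ assms(2)] by (intro sum.cong) auto
  then show ?thesis
    using assms(2) by simp
qed

lemma vector_mult_constructionA_basis_nth:
  "(z v* constructionA_basis C I) $ j =
     (\<Sum>i\<in>I. z$i *s constructionA_basis C I $ i) $ j + (if j \<in> I then 0 else 2 * z$j)"
proof -
  let ?B = "constructionA_basis C I"
  have "(z v* ?B)$j = (\<Sum>i\<in>UNIV - I. z$i * ?B$i$j) + (\<Sum>i\<in>I. z$i * ?B$i$j)"
    unfolding vector_matrix_mult_def by (simp add: sum.subset_diff[of I UNIV])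
  also have "(\<Sum>i\<in>UNIV - I. z$i * ?B$i$j) = (\<Sum>i\<in>UNIV - I. if i = j then 2 * z$i else 0)"
    by (intro sum.cong) (auto simp: constructionA_basis_def)
  finally show ?thesis
    by (simp add: sum.delta sum_component)
qed

lemma constructionA_int_even:
  assumes C: "binary_linear_code C" and I: "information_set C I"
    and y: "y \<in> constructionA_int C" "\<forall>j\<in>I. y$j = 0"
  shows "even (y$j)"
proof -
  have "parity_word y \<in> C" "zero_word \<in> C" "\<forall>i\<in>I. parity_word y $ i = zero_word $ i"
    using y C by (simp_all add: constructionA_int_def binary_linear_code_def parity_word_def zero_word_def)
  then have "parity_word y = zero_word"
    using information_set_unique[OF I] by blast
  then show ?thesis
    by (simp add: parity_word_def zero_word_def vec_eq_iff)
qed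

text \<open>Subtracting from \<open>x\<close> the combination \<open>w\<close> of the rows in \<open>I\<close> with coefficients \<open>x$i\<close>
  leaves a lattice vector vanishing on \<open>I\<close>, hence twice a combination of the rows outside \<open>I\<close>.\<close>
lemma range_constructionA_basis:
  assumes C: "binary_linear_code C" and I: "information_set C I"
  shows "range (\<lambda>z. z v* constructionA_basis C I) = constructionA_int C"
proof (intro subset_antisym subsetI)
  fix x
  assume "x \<in> range (\<lambda>z. z v* constructionA_basis C I)"
  then obtain z where "x = (\<Sum>i\<in>UNIV. z$i *s constructionA_basis C I $ i)"
    by (auto simp: vector_matrix_mult_eq_sum_rows)
  then show "x \<in> constructionA_int C"
    using constructionA_int_lincomb[OF C finite constructionA_basis_row_mem[OF C I]] by simp
next
  fix x
  assume x: "x \<in> constructionA_int C"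
  let ?B = "constructionA_basis C I"
  define w where "w = (\<Sum>i\<in>I. x$i *s ?B$i)"
  have "x + (-1) *s w \<in> constructionA_int C"
    unfolding w_def using C x constructionA_basis_row_mem[OF C I]
    by (intro constructionA_int_add constructionA_int_scale constructionA_int_lincomb) auto
  moreover have "x + (-1) *s w = x - w"
    by (simp add: vec_eq_iff)
  moreover have "\<forall>j\<in>I. (x - w)$j = 0"
    using sum_info_rows_nth[OF I] by (simp add: w_def)
  ultimately have even: "even ((x - w)$j)" for j
    using constructionA_int_even[OF C I] by metis
  define z where "z = (\<chi> i. if i \<in> I then x$i else (x - w)$i div 2)"
  have "(\<Sum>i\<in>I. z$i *s ?B$i) = w"
    by (simp add: w_def z_def)
  then have "(z v* ?B)$j = x$j" for j
    using sum_info_rows_nth[OF I, of j x] even[of j]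
    by (simp add: vector_mult_constructionA_basis_nth z_def w_def)
  then show "x \<in> range (\<lambda>z. z v* ?B)"
    by (metis rangeI vec_eq_iff)
qed

lemma det_block_triangular:
  fixes A :: "'a::comm_ring_1^'n^'n"
  assumes nonzero: "\<And>i j. A$i$j \<noteq> 0 \<Longrightarrow> j = i \<or> (i \<in> I \<and> j \<notin> I)"
  shows "det A = (\<Prod>i\<in>UNIV. A$i$i)"
proof -
  have "(\<Prod>i\<in>UNIV. A$i$p i) = 0" if p: "p permutes UNIV" "p \<noteq> id" for p
  proof (rule ccontr)
    assume "(\<Prod>i\<in>UNIV. A$i$p i) \<noteq> 0"
    then have nz: "A$i$p i \<noteq> 0" for i
      using prod_zero[OF finite, where f = "\<lambda>i. A$i$p i"] by blast
    have fixed_outside: "p i = i" if "i \<notin> I" for i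
      using nonzero[OF nz[of i]] that by auto
    have "p i = i" for i
    proof (cases "i \<in> I")
      case True
      show ?thesis
      proof (rule ccontr)
        assume "p i \<noteq> i"
        then have "p (p i) = p i"
          using nonzero[OF nz[of i]] fixed_outside by auto
        then show False
          using \<open>p i \<noteq> i\<close> permutes_inj[OF p(1)] by (auto dest: injD)
      qed
    qed (rule fixed_outside)
    then show False
      using p(2) by auto
  qed
  then have "(\<Sum>p\<in>{p. p permutes UNIV} - {id}. of_int (sign p) * (\<Prod>i\<in>UNIV. A$i$p i)) = 0"
    by (intro sum.neutral) auto
  moreover have "det A = of_int (sign (id :: 'n \<Rightarrow> 'n)) * (\<Prod>i\<in>UNIV. A$i$id i)
      + (\<Sum>p\<in>{p. p permutes UNIV} - {id}. of_int (sign p) * (\<Prod>i\<in>UNIV. A$i$p i))"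
    unfolding det_def by (rule sum.remove) (simp_all add: finite_permutations permutes_id)
  ultimately show ?thesis
    by (simp add: sign_id)
qed

definition constructionA_gen_matrix :: "(bool^'n) set \<Rightarrow> 'n set \<Rightarrow> real^'n^'n" where
  "constructionA_gen_matrix C I = (\<chi> i j. of_int (constructionA_basis C I $ i $ j) / sqrt 2)"

lemma int_vec_mult_constructionA_gen_matrix:
  "int_vec z v* constructionA_gen_matrix C I = (1 / sqrt 2) *\<^sub>R int_vec (z v* constructionA_basis C I)"
  by (simp add: vec_eq_iff vector_matrix_mult_def constructionA_gen_matrix_def int_vec_def
      sum_divide_distrib mult.commute)

lemma range_constructionA_gen_matrix:
  assumes "binary_linear_code C" "information_set C I"
  shows "range (\<lambda>z. int_vec z v* constructionA_gen_matrix C I) = constructionA C"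
  unfolding int_vec_mult_constructionA_gen_matrix constructionA_eq_image
    range_constructionA_basis[OF assms, symmetric] image_image ..

lemma det_constructionA_gen_matrix:
  fixes I :: "'n::finite set"
  assumes I: "information_set C I" and half: "CARD('n) = 2 * card I"
  shows "det (constructionA_gen_matrix C I) = 1"
proof -
  let ?G = "constructionA_gen_matrix C I"
  have "?G$i$j \<noteq> 0 \<Longrightarrow> j = i \<or> (i \<in> I \<and> j \<notin> I)" for i j
    using constructionA_basis_in_info[OF I, of i j]
    by (cases "i \<in> I") (auto simp: constructionA_gen_matrix_def constructionA_basis_def split: if_splits)
  then have "det ?G = (\<Prod>i\<in>UNIV. ?G$i$i)"
    by (rule det_block_triangular)
  also have "\<dots> = (\<Prod>i\<in>UNIV. if i \<in> I then 1 / sqrt 2 else 2 / sqrt 2)"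
    using constructionA_basis_in_info[OF I]
    by (intro prod.cong) (auto simp: constructionA_gen_matrix_def constructionA_basis_def)
  also have "\<dots> = (1 / sqrt 2) ^ card I * (2 / sqrt 2) ^ card (UNIV - I)"
    by (simp add: prod.If_cases Compl_eq_Diff_UNIV)
  also have "card (UNIV - I) = card I"
    using half by (simp add: card_Diff_subset)
  also have "(1 / sqrt 2) ^ card I * (2 / sqrt 2) ^ card I = ((1 / sqrt 2) * (2 / sqrt 2 :: real)) ^ card I"
    by (rule power_mult_distrib[symmetric])
  finally show ?thesis
    by simp
qed

lemma of_int_matrix_det: "det (\<chi> i j. (of_int (X$i$j) :: 'a::comm_ring_1)) = of_int (det X)"
  by (simp add: det_def of_int_sum of_int_mult of_int_prod)

lemma int_vec_unit_mult: "int_vec (\<chi> k. if k = i then 1 else 0) v* A = (A :: real^'n^'n) $ i"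
proof -
  have "(\<Sum>k\<in>UNIV. of_int (if k = i then 1 else 0) * A$k$j) = A$i$j" for j
    by (simp add: if_distrib[of of_int] if_distrib[of "\<lambda>t. t * _"] cong: if_cong)
  then show ?thesis
    by (simp add: vec_eq_iff vector_matrix_mult_def int_vec_def)
qed

text \<open>Each row of one generator matrix is an integer combination of the rows of the other.\<close>
lemma generator_matrix_det_factor:
  assumes A: "generator_matrix A L" and B: "generator_matrix B L"
  obtains X :: "int^'n^'n" where "det A = of_int (det X) * det (B :: real^'n^'n)"
proof -
  have "\<exists>u. A$i = int_vec u v* B" for i
  proof -
    have "A$i \<in> range (\<lambda>z. int_vec z v* A)"
      using int_vec_unit_mult[of i A] by (metis rangeI)
    then show ?thesis
      using A B by (auto simp: generator_matrix_def)
  qed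
  then obtain U where U: "\<And>i. A$i = int_vec (U i) v* B"
    by metis
  define X :: "int^'n^'n" where "X = (\<chi> i. U i)"
  have "A$i$j = ((\<chi> i j. (of_int (X$i$j) :: real)) ** B)$i$j" for i j
  proof -
    have "A$i$j = (int_vec (U i) v* B)$j"
      using U by simp
    also have "\<dots> = ((\<chi> i j. (of_int (X$i$j) :: real)) ** B)$i$j"
      by (simp add: vector_matrix_mult_def matrix_matrix_mult_def int_vec_def X_def)
    finally show ?thesis .
  qed
  then have "A = (\<chi> i j. (of_int (X$i$j) :: real)) ** B"
    by (simp add: vec_eq_iff)
  then have "det A = of_int (det X) * det B"
    by (simp add: det_mul of_int_matrix_det)
  then show ?thesis
    by (rule that)
qed

lemma generator_matrix_abs_det_eq:
  assumes A: "generator_matrix A L" and B: "generator_matrix B L"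
  shows "\<bar>det A\<bar> = \<bar>det (B :: real^'n^'n)\<bar>"
proof -
  obtain X :: "int^'n^'n" where X: "det A = of_int (det X) * det B"
    using generator_matrix_det_factor[OF A B] by blast
  obtain Y :: "int^'n^'n" where Y: "det B = of_int (det Y) * det A"
    using generator_matrix_det_factor[OF B A] by blast
  have "det A \<noteq> 0"
    using A by (simp add: generator_matrix_def invertible_det_nz)
  moreover have "det A = of_int (det X * det Y) * det A"
    using X Y by simp
  ultimately have "of_int (det X * det Y) = (1::real)"
    by simp
  then have "det X * det Y = 1"
    by (metis of_int_eq_1_iff)
  then have "\<bar>of_int (det X) :: real\<bar> = 1"
    by (auto simp: zmult_eq_1_iff)
  then show ?thesis
    using X by (simp add: abs_mult)
qed

lemma lattice_volume_eq_abs_det: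
  assumes "generator_matrix M L"
  shows "lattice_volume L = \<bar>det M\<bar>"
proof -
  have "generator_matrix (SOME M. generator_matrix M L) L"
    using assms by (rule someI)
  then show ?thesis
    unfolding lattice_volume_def by (rule generator_matrix_abs_det_eq[OF _ assms])
qed

lemma lattice_volume_constructionA:
  fixes C :: "(bool^'n) set"
  assumes F: "formally_self_dual C"
  shows "lattice_volume (constructionA C) = 1"
proof -
  have C: "binary_linear_code C"
    using F by (simp add: formally_self_dual_def)
  obtain I where I: "information_set C I"
    using information_set_exists[OF C] by blast
  have det: "det (constructionA_gen_matrix C I) = 1"
    using I card_information_set_formally_self_dual[OF F I] by (rule det_constructionA_gen_matrix)
  then have "generator_matrix (constructionA_gen_matrix C I) (constructionA C)"
    using range_constructionA_gen_matrix[OF C I] by (simp add: generator_matrix_def invertible_det_nz)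
  then show ?thesis
    using det by (simp add: lattice_volume_eq_abs_det)
qed

section \<open>Theta series and the secrecy function\<close>

text \<open>Summability on the product follows from the product formula itself: a nonsummable
  family has \<open>infsum\<close> 0, whereas the product of the factor sums is positive.\<close>
lemma has_sum_prod_vec:
  fixes g :: "'n::finite \<Rightarrow> 'a \<Rightarrow> real"
  assumes pos: "\<And>j m. g j m > 0" and summable: "\<And>j. g j summable_on UNIV"
  shows "((\<lambda>z::'a^'n. \<Prod>j\<in>UNIV. g j (z$j)) has_sum (\<Prod>j\<in>UNIV. infsum (g j) UNIV)) UNIV"
proof -
  have abs: "(\<lambda>m. \<bar>g j m\<bar>) summable_on UNIV" for j
    using summable[of j] by (simp add: abs_of_pos pos)
  have eq: "infsum (\<lambda>f. \<Prod>j\<in>UNIV. g j (f j)) (PiE UNIV (\<lambda>_. UNIV)) = (\<Prod>j\<in>UNIV. infsum (g j) UNIV)"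
    by (rule infsum_prod_PiE_abs) (simp_all add: abs)
  have "infsum (g j) UNIV > 0" for j
  proof -
    have "sum (g j) {undefined} \<le> infsum (g j) UNIV"
      by (rule finite_sum_le_infsum[OF summable]) (auto intro: less_imp_le pos)
    then show ?thesis
      using pos[of j undefined] by simp
  qed
  then have "(\<Prod>j\<in>UNIV. infsum (g j) UNIV) \<noteq> 0"
    by (simp add: prod_pos less_imp_neq[symmetric])
  then have "(\<lambda>f. \<Prod>j\<in>UNIV. g j (f j)) summable_on PiE UNIV (\<lambda>_. UNIV)"
    using eq infsum_not_exists by fastforce
  then have "((\<lambda>f. \<Prod>j\<in>UNIV. g j (f j)) has_sum (\<Prod>j\<in>UNIV. infsum (g j) UNIV)) UNIV"
    using eq by (metis PiE_UNIV has_sum_infsum)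
  moreover have "bij_betw (vec_nth :: 'a^'n \<Rightarrow> 'n \<Rightarrow> 'a) UNIV UNIV"
    by (rule bij_betw_byWitness[where f' = vec_lambda]) auto
  ultimately show ?thesis
    using has_sum_reindex_bij_betw[of vec_nth UNIV UNIV "\<lambda>f. \<Prod>j\<in>UNIV. g j (f j)"] by (simp add: o_def)
qed

lemma theta_series_imag_axis:
  assumes "((\<lambda>l. exp (- (pi * u * (norm l)\<^sup>2))) has_sum S) L"
  shows "theta_series L (\<i> * complex_of_real u) = complex_of_real S"
proof -
  have "(\<lambda>l. exp (\<i> * complex_of_real pi * (\<i> * complex_of_real u) * complex_of_real ((norm l)\<^sup>2))) =
        (\<lambda>l. complex_of_real (exp (- (pi * u * (norm l)\<^sup>2))))"
    by (simp add: fun_eq_iff exp_of_real[symmetric] mult_ac)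
  then show ?thesis
    unfolding theta_series_def by (subst \<open>(\<lambda>l. _) = _\<close>) (rule infsumI[OF has_sum_of_real[OF assms]])
qed

lemma gauss_norm_vec: "exp (- (pi * u * (norm (v :: real^'n))\<^sup>2)) = (\<Prod>j\<in>UNIV. gauss u (v$j))"
proof -
  have "(norm v)\<^sup>2 = (\<Sum>j\<in>UNIV. (v$j)\<^sup>2)"
    unfolding power2_norm_eq_inner by (simp add: inner_vec_def power2_eq_square)
  then show ?thesis
    by (simp add: gauss_def sum_distrib_left exp_sum[symmetric] sum_negf)
qed

lemma inj_int_vec: "inj int_vec"
  by (rule injI) (simp add: int_vec_def vec_eq_iff)

lemma theta_series_Zn:
  assumes u: "u > 0"
  shows "theta_series (range (int_vec :: int^'n \<Rightarrow> real^'n)) (\<i> * complex_of_real u) =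
           complex_of_real (theta3_axis u ^ CARD('n))"
proof (rule theta_series_imag_axis)
  have "((\<lambda>z::int^'n. \<Prod>j\<in>UNIV. gauss u (of_int (z$j))) has_sum
          (\<Prod>j\<in>(UNIV :: 'n set). infsum (\<lambda>m::int. gauss u (of_int m)) UNIV)) UNIV"
    by (rule has_sum_prod_vec) (simp_all add: summable_on_gauss u)
  then have "((\<lambda>z::int^'n. \<Prod>j\<in>UNIV. gauss u (of_int (z$j))) has_sum theta3_axis u ^ CARD('n)) UNIV"
    by (simp add: theta3_axis_def)
  then show "((\<lambda>l. exp (- (pi * u * (norm l)\<^sup>2))) has_sum theta3_axis u ^ CARD('n))
          (range (int_vec :: int^'n \<Rightarrow> real^'n))"
    by (subst has_sum_reindex[OF inj_on_subset[OF inj_int_vec]]) (simp_all add: o_def gauss_norm_vec int_vec_def)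
qed

definition constructionA_point :: "bool^'n \<Rightarrow> int^'n \<Rightarrow> real^'n" where
  "constructionA_point c z = (1 / sqrt 2) *\<^sub>R (embed_word c + 2 *\<^sub>R int_vec z)"

lemma constructionA_point_nth:
  "constructionA_point c z $ j = (of_int (z$j) + (if c$j then 1/2 else 0)) * sqrt 2"
  by (simp add: constructionA_point_def embed_word_def int_vec_def field_simps real_sqrt_divide)

lemma half_integer_eq_iff:
  "of_int a + (if p then 1/2 else 0) = of_int b + (if q then 1/2 else (0 :: real)) \<longleftrightarrow> a = b \<and> p = q"
proof -
  have "of_int a + (if p then 1/2 else 0) = of_int b + (if q then 1/2 else (0 :: real)) \<longleftrightarrow>
        (of_int (2 * a + (if p then 1 else 0)) :: real) = of_int (2 * b + (if q then 1 else 0))"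
    by (cases p; cases q) (simp_all add: field_simps)
  also have "\<dots> \<longleftrightarrow> a = b \<and> p = q"
    unfolding of_int_eq_iff by (cases p; cases q) presburger+
  finally show ?thesis .
qed

lemma constructionA_point_inject:
  assumes "constructionA_point c z = constructionA_point c' z'"
  shows "c = c' \<and> z = z'"
proof -
  have "of_int (z$j) + (if c$j then 1/2 else 0) = of_int (z'$j) + (if c'$j then (1/2 :: real) else 0)" for j
    using arg_cong[OF assms, of "\<lambda>v. v$j"] by (simp add: constructionA_point_nth)
  then have "c$j = c'$j \<and> z$j = z'$j" for j
    by (simp only: half_integer_eq_iff)
  then show ?thesis
    by (simp add: vec_eq_iff)
qed

lemma gauss_norm_constructionA_point:
  "exp (- (pi * u * (norm (constructionA_point c z))\<^sup>2)) =
     (\<Prod>j\<in>UNIV. gauss (2 * u) (of_int (z$j) + (if c$j then 1/2 else 0)))"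
  unfolding gauss_norm_vec by (simp add: constructionA_point_nth gauss_def power_mult_distrib mult_ac)

lemma sum_prod_eq_weight_enum:
  "(\<Sum>c\<in>C. \<Prod>j\<in>UNIV. if c$j then y else x) = weight_enum (C :: (bool^'n) set) x y"
proof -
  have "(\<Prod>j\<in>UNIV. if c$j then y else x) = x ^ (CARD('n) - hamming_weight c) * y ^ hamming_weight c"
    for c :: "bool^'n"
    using card_Diff_subset[of "{j. c$j}" UNIV]
    by (simp add: prod.If_cases hamming_weight_def Compl_eq_Diff_UNIV mult.commute)
  then have "(\<Sum>c\<in>C. \<Prod>j\<in>UNIV. if c$j then y else x) =
             (\<Sum>c\<in>C. x ^ (CARD('n) - hamming_weight c) * y ^ hamming_weight c)"
    by simp
  also have "\<dots> = (\<Sum>w\<in>{0..CARD('n)}. \<Sum>c\<in>{c\<in>C. hamming_weight c = w}.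
                       x ^ (CARD('n) - hamming_weight c) * y ^ hamming_weight c)"
    by (rule sum.group[symmetric]) (auto simp: hamming_weight_le)
  also have "\<dots> = (\<Sum>w\<in>{0..CARD('n)}. real (weight_dist C w) * x ^ (CARD('n) - w) * y ^ w)"
  proof (rule sum.cong[OF refl])
    fix w
    have "(\<Sum>c\<in>{c\<in>C. hamming_weight c = w}. x ^ (CARD('n) - hamming_weight c) * y ^ hamming_weight c) =
          (\<Sum>c\<in>{c\<in>C. hamming_weight c = w}. x ^ (CARD('n) - w) * y ^ w)"
      by (rule sum.cong) auto
    then show "(\<Sum>c\<in>{c\<in>C. hamming_weight c = w}. x ^ (CARD('n) - hamming_weight c) * y ^ hamming_weight c) =
               real (weight_dist C w) * x ^ (CARD('n) - w) * y ^ w"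
      by (simp add: weight_dist_def)
  qed
  finally show ?thesis
    by (simp add: weight_enum_def)
qed

lemma has_sum_gauss_constructionA:
  assumes u: "u > 0"
  shows "((\<lambda>l. exp (- (pi * u * (norm l)\<^sup>2))) has_sum
            weight_enum C (theta3_axis (2 * u)) (theta2_axis (2 * u))) (constructionA (C :: (bool^'n) set))"
proof -
  have coset: "((\<lambda>l. exp (- (pi * u * (norm l)\<^sup>2))) has_sum
                 (\<Prod>j\<in>UNIV. if c$j then theta2_axis (2 * u) else theta3_axis (2 * u))) (range (constructionA_point c))"
    for c :: "bool^'n"
  proof -
    have "infsum (\<lambda>m::int. gauss (2 * u) (of_int m + (if b then 1/2 else 0))) UNIV =
          (if b then theta2_axis (2 * u) else theta3_axis (2 * u))" for b
      by (simp add: theta2_axis_def theta3_axis_def)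
    then have "((\<lambda>z::int^'n. \<Prod>j\<in>UNIV. gauss (2 * u) (of_int (z$j) + (if c$j then 1/2 else 0))) has_sum
                (\<Prod>j\<in>UNIV. if c$j then theta2_axis (2 * u) else theta3_axis (2 * u))) UNIV"
      using has_sum_prod_vec[of "\<lambda>j m. gauss (2 * u) (of_int m + (if c$j then 1/2 else 0))"]
        summable_on_gauss_shift u by simp
    moreover have "inj (constructionA_point c)"
      by (rule injI) (simp add: constructionA_point_inject)
    ultimately show ?thesis
      by (subst has_sum_reindex) (simp_all add: o_def gauss_norm_constructionA_point)
  qed
  have "constructionA C = (\<Union>c\<in>C. range (constructionA_point c))"
    by (auto simp: constructionA_def constructionA_point_def)
  moreover have "((\<lambda>l. exp (- (pi * u * (norm l)\<^sup>2))) has_sum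
      (\<Sum>c\<in>C. \<Prod>j\<in>UNIV. if c$j then theta2_axis (2 * u) else theta3_axis (2 * u))) (\<Union>c\<in>C. range (constructionA_point c))"
    by (rule sum_has_sum) (auto simp: coset dest: constructionA_point_inject)
  ultimately show ?thesis
    by (simp add: sum_prod_eq_weight_enum)
qed

lemma theta_series_constructionA:
  "u > 0 \<Longrightarrow> theta_series (constructionA C) (\<i> * complex_of_real u) =
     complex_of_real (weight_enum C (theta3_axis (2 * u)) (theta2_axis (2 * u)))"
  by (rule theta_series_imag_axis[OF has_sum_gauss_constructionA])

lemma jacobi_theta3_imag_axis:
  assumes "u > 0"
  shows "jacobi_theta3 (\<i> * complex_of_real u) = complex_of_real (theta3_axis u)"
proof -
  have "(\<lambda>m::int. exp (\<i> * complex_of_real pi * (\<i> * complex_of_real u) * of_int (m\<^sup>2))) =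
        (\<lambda>m. complex_of_real (gauss u (of_int m)))"
    by (simp add: fun_eq_iff gauss_def exp_of_real[symmetric] mult_ac)
  then show ?thesis
    unfolding jacobi_theta3_def theta3_axis_def
    by (simp only: infsumI[OF has_sum_of_real[OF has_sum_infsum[OF summable_on_gauss[OF assms]]]])
qed

lemma jacobi_theta4_imag_axis:
  assumes "u > 0"
  shows "jacobi_theta4 (\<i> * complex_of_real u) = complex_of_real (theta4_axis u)"
proof -
  have "(\<lambda>m::int. (-1) powi m * exp (\<i> * complex_of_real pi * (\<i> * complex_of_real u) * of_int (m\<^sup>2))) =
        (\<lambda>m. complex_of_real (alt_sign m * gauss u (of_int m)))"
    by (simp add: fun_eq_iff gauss_def alt_sign_def power_int_minus_left exp_of_real[symmetric] mult_ac)
  then show ?thesis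
    unfolding jacobi_theta4_def theta4_axis_def
    by (simp only: infsumI[OF has_sum_of_real[OF has_sum_infsum[OF summable_on_alt_sign_gauss[OF assms]]]])
qed

lemma theta_ratio_eq_theta_quotient:
  "u > 0 \<Longrightarrow> theta_ratio u = complex_of_real (theta_quotient u)"
  by (simp add: theta_ratio_def theta_quotient_def jacobi_theta3_imag_axis jacobi_theta4_imag_axis power_divide)

lemma weight_enum_pos:
  assumes "C \<noteq> {}" "x > 0" "y > 0"
  shows "weight_enum C x y > 0"
  unfolding sum_prod_eq_weight_enum[symmetric] using assms by (intro sum_pos prod_pos) auto

lemma f_code_pos:
  assumes "binary_linear_code C" "-1 < t" "t < 1"
  shows "f_code C t > 0"
  using assms weight_enum_pos[of C "sqrt (1 + t)" "sqrt (1 - t)"] by (auto simp: f_code_def binary_linear_code_def)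

lemma weight_enum_scale: "weight_enum C (a * x) (a * y) = a ^ CARD('n) * weight_enum (C :: (bool^'n) set) x y"
proof -
  have "real (weight_dist C w) * (a * x) ^ (CARD('n) - w) * (a * y) ^ w =
        a ^ CARD('n) * (real (weight_dist C w) * x ^ (CARD('n) - w) * y ^ w)"
    if "w \<in> {0..CARD('n)}" for w
  proof -
    have "a ^ (CARD('n) - w) * a ^ w = a ^ CARD('n)"
      using that by (simp add: power_add[symmetric])
    then show ?thesis
      by (simp add: power_mult_distrib mult_ac)
  qed
  then show ?thesis
    unfolding weight_enum_def sum_distrib_left by (rule sum.cong[OF refl])
qed

lemma secrecy_function_constructionA:
  fixes C :: "(bool^'n) set"
  assumes "formally_self_dual C" "u > 0"
  shows "secrecy_function (constructionA C) u =
           complex_of_real (theta3_axis u ^ CARD('n) / weight_enum C (theta3_axis (2 * u)) (theta2_axis (2 * u)))"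
proof -
  have "scaled_Zn 1 = range (int_vec :: int^'n \<Rightarrow> real^'n)"
    by (simp add: scaled_Zn_def)
  then show ?thesis
    using assms(2)
    by (simp add: secrecy_function_def lattice_volume_constructionA[OF assms(1)] theta_series_Zn
        theta_series_constructionA)
qed

lemma sqrt_2_power: "sqrt 2 ^ n = 2 powr (real n / 2)"
  by (simp add: powr_half_sqrt[symmetric] powr_realpow[symmetric] powr_powr)

lemma inverse_secrecy_function_constructionA:
  fixes C :: "(bool^'n) set"
  assumes F: "formally_self_dual C" and u: "u > 0"
  shows "inverse (secrecy_function (constructionA C) u) =
           complex_of_real (f_code C (theta_quotient u) / 2 powr (real CARD('n) / 2))"
proof -
  let ?a = "theta3_axis u / sqrt 2"
  have "weight_enum C (theta3_axis (2 * u)) (theta2_axis (2 * u)) = ?a ^ CARD('n) * f_code C (theta_quotient u)"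
    unfolding theta_axis_double[OF u] f_code_def by (rule weight_enum_scale)
  moreover have "theta3_axis u > 0"
    using theta3_axis_pos[OF u] .
  ultimately show ?thesis
    by (simp add: secrecy_function_constructionA[OF F u] power_divide sqrt_2_power flip: of_real_inverse)
qed

lemma maximum_reciprocal_iff_minimum:
  fixes g :: "'a \<Rightarrow> real" and t :: "'a \<Rightarrow> real"
  assumes g: "\<And>x. x \<in> A \<Longrightarrow> g x = K / f (t x)" and "K > 0"
    and f: "\<And>s. s \<in> t ` A \<Longrightarrow> f s > 0" and "x0 \<in> A"
  shows "(\<forall>x\<in>A. g x \<le> g x0) \<longleftrightarrow> (\<forall>s\<in>t ` A. f (t x0) \<le> f s)"
proof -
  have "g x \<le> g x0 \<longleftrightarrow> f (t x0) \<le> f (t x)" if "x \<in> A" for x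
    unfolding g[OF that] g[OF \<open>x0 \<in> A\<close>] using f[of "t x"] f[of "t x0"] that \<open>x0 \<in> A\<close> \<open>K > 0\<close>
    by (simp add: divide_inverse inverse_le_iff_le)
  then show ?thesis
    by auto
qed

lemma image_Re_theta_ratio: "(\<lambda>\<tau>. Re (theta_ratio \<tau>)) ` {0<..} = {0<..<1}"
proof -
  have "(\<lambda>\<tau>. Re (theta_ratio \<tau>)) ` {0<..} = theta_quotient ` {0<..}"
    by (rule image_cong) (simp_all add: theta_ratio_eq_theta_quotient)
  then show ?thesis
    by (simp add: image_theta_quotient)
qed

lemma Re_secrecy_function_constructionA:
  fixes C :: "(bool^'n) set"
  assumes "formally_self_dual C" "u > 0"
  shows "Re (secrecy_function (constructionA C) u) = 2 powr (real CARD('n) / 2) / f_code C (theta_quotient u)"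
  using arg_cong[OF inverse_secrecy_function_constructionA[OF assms], of inverse]
  by (simp flip: of_real_inverse)

theorem theorem2:
  fixes C :: "(bool^'n) set"
  assumes "formally_self_dual C"
  shows "(\<forall>\<tau>>0. theta_ratio \<tau> \<in> \<real> \<and> 0 < Re (theta_ratio \<tau>) \<and> Re (theta_ratio \<tau>) < 1 \<and>
            inverse (secrecy_function (constructionA C) \<tau>) =
              complex_of_real (f_code C (Re (theta_ratio \<tau>)) / 2 powr (real CARD('n) / 2)))
       \<and> (\<lambda>\<tau>. Re (theta_ratio \<tau>)) ` {0<..} = {0<..<1}
       \<and> (\<forall>\<tau>0>0. (\<forall>\<tau>>0. Re (secrecy_function (constructionA C) \<tau>)
                              \<le> Re (secrecy_function (constructionA C) \<tau>0))
                 \<longleftrightarrow> (\<forall>t\<in>{0<..<1}. f_code C (Re (theta_ratio \<tau>0)) \<le> f_code C t))"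
proof -
  have f_pos: "f_code C s > 0" if "s \<in> theta_quotient ` {0<..}" for s
    using assms that by (intro f_code_pos) (auto simp: image_theta_quotient formally_self_dual_def)
  show ?thesis
  proof (intro conjI allI impI image_Re_theta_ratio)
    fix \<tau> :: real
    assume "\<tau> > 0"
    then show "theta_ratio \<tau> \<in> \<real>" "0 < Re (theta_ratio \<tau>)" "Re (theta_ratio \<tau>) < 1"
        "inverse (secrecy_function (constructionA C) \<tau>) =
           complex_of_real (f_code C (Re (theta_ratio \<tau>)) / 2 powr (real CARD('n) / 2))"
      by (simp_all add: theta_ratio_eq_theta_quotient theta_quotient_pos theta_quotient_less_1
          inverse_secrecy_function_constructionA[OF assms])
  next
    fix \<tau>0 :: real
    assume "\<tau>0 > 0"
    then have "(\<forall>\<tau>\<in>{0<..}. Re (secrecy_function (constructionA C) \<tau>) \<le> Re (secrecy_function (constructionA C) \<tau>0))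
               \<longleftrightarrow> (\<forall>s\<in>theta_quotient ` {0<..}. f_code C (theta_quotient \<tau>0) \<le> f_code C s)"
      by (intro maximum_reciprocal_iff_minimum[where K = "2 powr (real CARD('n) / 2)"]
          Re_secrecy_function_constructionA[OF assms] f_pos) auto
    then show "(\<forall>\<tau>>0. Re (secrecy_function (constructionA C) \<tau>) \<le> Re (secrecy_function (constructionA C) \<tau>0))
               \<longleftrightarrow> (\<forall>t\<in>{0<..<1}. f_code C (Re (theta_ratio \<tau>0)) \<le> f_code C t)"
      using \<open>\<tau>0 > 0\<close> by (simp add: image_theta_quotient theta_ratio_eq_theta_quotient Ball_def)
  qed
qed

end
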